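(* In the setting of the splitting scheme described in the context, there exists a constant $C>0$, independent of $h$ and $R$, such that $$\sum_{n=1}^N\mathcal{W}_h(\bar f^n_{h,R},f^n_{h,R})^2\le C\Big(h\int_{\mathbb{R}^{2d}}\Psi(v)f_0(x,v)\,dx\,dv+T\|D^2\Psi\|_{\infty}\big(h^{1/2}+hR^{2-2s}\big)\Big).$$
   Context: Fix $d\ge1$, $s\in(0,1]$, $T>0$, $N\in\mathbb{N}$, $h=T/N$, $t_n=nh$, and $R>0$. Let $\Psi:\mathbb{R}^d\to[0,\infty)$ with $\Psi\in C^{1,1}\cap C^{2,1}(\mathbb{R}^d)$, and $f_0\in\mathcal{P}^2_a(\mathbb{R}^{2d})$ (probability densities on $\mathbb{R}^{2d}$, points $(x,v)$, with finite second moment) with $\int\Psi(v)f_0\,dx\,dv<\infty$. Let $\Phi_s(\cdot,t)$ be the probability density on $\mathbb{R}^d$ with Fourier transform $e^{-t|\xi|^{2s}}$, $\Phi^h_s:=\Phi_s(\cdot,h)$, and $\Phi^h_{s,R}:=\Phi^h_s\mathbf{1}_{B_R}$ ($B_R$ the centred ball of radius $R$). Cost: $C_h(x,v;x',v')=|v'-v|^2+12|\frac{x'-x}{h}-\frac{v'+v}{2}|^2$, and $\mathcal{W}_h(\mu,\nu)^2=\min_{p\in\mathcal{P}(\mu,\nu)}\int C_h\,dp$ over couplings $p$ with first marginal $\mu$, second marginal $\nu$. Scheme: $f^0_{h,R}=f_0$; for $n=1,\dots,N$, $\bar f^n_{h,R}(x,v):=\|\Phi^h_{s,R}\|_{L^1}^{-1}\int_{\mathbb{R}^d}\Phi^h_{s,R}(w)f^{n-1}_{h,R}(x,v-w)\,dw$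 and $f^n_{h,R}$ is the unique minimizer over $\mathcal{P}^2_a(\mathbb{R}^{2d})$ of $f\mapsto\frac1{2h}\mathcal{W}_h(\bar f^n_{h,R},f)^2+\int\Psi(v)f\,dx\,dv$ ($h$ is assumed small enough that this minimizer exists and is unique). *)

theory Defs
  imports "HOL-Probability.Probability"
begin

text \<open>Phase space points are pairs (x,v) in 'a \<times> 'a, with 'a a Euclidean space of dimension d.
  Densities are real-valued functions on the product, w.r.t. Lebesgue measure.\<close>

definition P2a :: "('a::euclidean_space \<times> 'a \<Rightarrow> real) set" where
  "P2a = {f. f \<in> borel_measurable borel \<and> (\<forall>z. 0 \<le> f z)
            \<and> integrable lborel f \<and> integral\<^sup>L lborel f = 1
            \<and> integrable lborel (\<lambda>z. (norm z)\<^sup>2 * f z)}"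

definition cost_h :: "real \<Rightarrow> ('a::euclidean_space \<times> 'a) \<times> ('a \<times> 'a) \<Rightarrow> real" where
  "cost_h h z = (case z of ((x, v), (x', v')) \<Rightarrow>
      (norm (v' - v))\<^sup>2 + 12 * (norm ((1 / h) *\<^sub>R (x' - x) - (1/2) *\<^sub>R (v' + v)))\<^sup>2)"

definition couplings :: "('a::euclidean_space \<times> 'a \<Rightarrow> real) \<Rightarrow> ('a \<times> 'a \<Rightarrow> real)
     \<Rightarrow> (('a \<times> 'a) \<times> ('a \<times> 'a)) measure set" where
  "couplings \<mu> \<nu> = {p. sets p = sets borel \<and> prob_space p
      \<and> distr p borel fst = density lborel (\<lambda>z. ennreal (\<mu> z))
      \<and> distr p borel snd = density lborel (\<lambda>z. ennreal (\<nu> z))}"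

definition Wh2 :: "real \<Rightarrow> ('a::euclidean_space \<times> 'a \<Rightarrow> real) \<Rightarrow> ('a \<times> 'a \<Rightarrow> real) \<Rightarrow> ennreal" where
  "Wh2 h \<mu> \<nu> = (INF p\<in>couplings \<mu> \<nu>. \<integral>\<^sup>+ z. ennreal (cost_h h z) \<partial>p)"

definition frac_heat_kernel :: "real \<Rightarrow> real \<Rightarrow> ('a::euclidean_space \<Rightarrow> real) \<Rightarrow> bool" where
  "frac_heat_kernel s t phi \<longleftrightarrow> phi \<in> borel_measurable borel \<and> (\<forall>w. 0 \<le> phi w)
     \<and> integrable lborel phi \<and> integral\<^sup>L lborel phi = 1
     \<and> (\<forall>\<xi>. integrable lborel (\<lambda>w. complex_of_real (phi w) * cis (- (\<xi> \<bullet> w)))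
          \<and> (\<integral>w. complex_of_real (phi w) * cis (- (\<xi> \<bullet> w)) \<partial>lborel)
             = complex_of_real (exp (- (t * norm \<xi> powr (2 * s)))))"

definition trunc_conv :: "('a::euclidean_space \<Rightarrow> real) \<Rightarrow> real \<Rightarrow> ('a \<times> 'a \<Rightarrow> real) \<Rightarrow> ('a \<times> 'a \<Rightarrow> real)" where
  "trunc_conv phi R f = (\<lambda>(x, v).
      (\<integral>w. indicator (cball 0 R) w * phi w * f (x, v - w) \<partial>lborel)
      / (\<integral>w. indicator (cball 0 R) w * phi w \<partial>lborel))"

definition JKO_functional :: "real \<Rightarrow> ('a::euclidean_space \<Rightarrow> real) \<Rightarrow> ('a \<times> 'a \<Rightarrow> real)
    \<Rightarrow> ('a \<times> 'a \<Rightarrow> real) \<Rightarrow> ennreal" where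
  "JKO_functional h Psi fbar f =
     ennreal (1 / (2 * h)) * Wh2 h fbar f + (\<integral>\<^sup>+ z. ennreal (Psi (snd z) * f z) \<partial>lborel)"

end

(* Each step of the scheme is compared with the free transport (x, v) |-> (x + h v, v) of the
   convolved density fbar^n: that competitor has zero kinetic Wasserstein cost and the same potential
   energy, so minimality gives  W_h(fbar^n, f^n)^2 / (2h) + int Psi f^n <= int Psi fbar^n.
   Convolving in v with the truncated kernel raises int Psi by at most ||D^2 Psi|| / 2 times the
   kernel's second moment, because its first moment vanishes; the second moment is O(h R^(2-2s)),
   which follows from 1 - exp (-h |xi|^(2s)) <= h |xi|^(2s) for the Fourier transform. Summing the
   resulting telescoping inequalities over n gives the estimate with C = 2 + 16 d^2.
   The vanishing first moment uses the symmetry of Phi_s: its Fourier transform is real, so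
   Phi_s(w) - Phi_s(-w) annihilates every trigonometric polynomial, and (u . w) 1_{B_R}(w) is a
   bounded pointwise limit of uniform limits of trigonometric polynomials. *)

theory Submission
  imports Defs "HOL-Real_Asymp.Real_Asymp"
begin

lemma integrable_mult_bounded:
  fixes g T :: "'b \<Rightarrow> real"
  assumes "integrable M g" "T \<in> borel_measurable M" "\<And>x. x \<in> space M \<Longrightarrow> \<bar>T x\<bar> \<le> B"
  shows "integrable M (\<lambda>x. g x * T x)"
proof (rule Bochner_Integration.integrable_bound[where f = "\<lambda>x. B * g x"])
  show "AE x in M. norm (g x * T x) \<le> norm (B * g x)"
  proof (rule AE_I2)
    fix x assume "x \<in> space M"
    then have "\<bar>g x\<bar> * \<bar>T x\<bar> \<le> \<bar>g x\<bar> * \<bar>B\<bar>"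
      using assms(3) by (intro mult_left_mono) force+
    then show "norm (g x * T x) \<le> norm (B * g x)" by (simp add: abs_mult mult.commute)
  qed
qed (use assms in \<open>auto intro: borel_measurable_integrable\<close>)

lemma cball_in_borel[measurable]: "cball (c::'a::metric_space) r \<in> sets borel"
  by (simp add: borel_closed)

lemma sum_Basis_inner_squared: "(\<Sum>b\<in>Basis. (w \<bullet> b)\<^sup>2) = (norm (w::'a::euclidean_space))\<^sup>2"
proof -
  have "(norm w)\<^sup>2 = (\<Sum>b\<in>Basis. (w \<bullet> b) * (w \<bullet> b))"
    by (simp add: power2_norm_eq_inner euclidean_inner[of w w])
  then show ?thesis by (simp add: power2_eq_square)
qed

section \<open>Trigonometric polynomials\<close>

inductive trig_poly :: "('a::euclidean_space \<Rightarrow> real) \<Rightarrow> bool" where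
  cos_term: "trig_poly (\<lambda>w. c * cos (\<xi> \<bullet> w))"
| sin_term: "trig_poly (\<lambda>w. c * sin (\<xi> \<bullet> w))"
| add: "trig_poly f \<Longrightarrow> trig_poly g \<Longrightarrow> trig_poly (\<lambda>w. f w + g w)"

lemma trig_poly_const: "trig_poly (\<lambda>w::'a::euclidean_space. c)"
  using trig_poly.cos_term[of c "0::'a"] by simp

lemma trig_poly_cmult: "trig_poly f \<Longrightarrow> trig_poly (\<lambda>w. a * f w)"
proof (induction rule: trig_poly.induct)
  case (cos_term c \<xi>) show ?case using trig_poly.cos_term[of "a * c" \<xi>] by (simp add: mult.assoc)
next
  case (sin_term c \<xi>) show ?case using trig_poly.sin_term[of "a * c" \<xi>] by (simp add: mult.assoc)
next
  case (add f g) then show ?case using trig_poly.add by (simp add: distrib_left)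
qed

lemma trig_poly_mult_cos: "trig_poly f \<Longrightarrow> trig_poly (\<lambda>w. cos (\<eta> \<bullet> w) * f w)"
proof (induction rule: trig_poly.induct)
  case (cos_term c \<xi>)
  have "trig_poly (\<lambda>w. (c/2) * cos ((\<xi> - \<eta>) \<bullet> w) + (c/2) * cos ((\<xi> + \<eta>) \<bullet> w))"
    by (intro trig_poly.intros)
  then show ?case by (simp add: inner_diff_left inner_add_left cos_diff cos_add algebra_simps)
next
  case (sin_term c \<xi>)
  have "trig_poly (\<lambda>w. (c/2) * sin ((\<xi> - \<eta>) \<bullet> w) + (c/2) * sin ((\<xi> + \<eta>) \<bullet> w))"
    by (intro trig_poly.intros)
  then show ?case by (simp add: inner_diff_left inner_add_left sin_diff sin_add algebra_simps)
next
  case (add f g) then show ?case using trig_poly.add by (simp add: distrib_left)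
qed

lemma trig_poly_mult_sin: "trig_poly f \<Longrightarrow> trig_poly (\<lambda>w. sin (\<eta> \<bullet> w) * f w)"
proof (induction rule: trig_poly.induct)
  case (cos_term c \<xi>)
  have "trig_poly (\<lambda>w. (-c/2) * sin ((\<xi> - \<eta>) \<bullet> w) + (c/2) * sin ((\<xi> + \<eta>) \<bullet> w))"
    by (intro trig_poly.intros)
  then show ?case by (simp add: inner_diff_left inner_add_left sin_diff sin_add algebra_simps)
next
  case (sin_term c \<xi>)
  have "trig_poly (\<lambda>w. (c/2) * cos ((\<xi> - \<eta>) \<bullet> w) + (-c/2) * cos ((\<xi> + \<eta>) \<bullet> w))"
    by (intro trig_poly.intros)
  then show ?case by (simp add: inner_diff_left inner_add_left cos_diff cos_add algebra_simps)
next
  case (add f g) then show ?case using trig_poly.add by (simp add: distrib_left)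
qed

lemma trig_poly_mult: "trig_poly f \<Longrightarrow> trig_poly g \<Longrightarrow> trig_poly (\<lambda>w. f w * g w)"
proof (induction rule: trig_poly.induct)
  case (cos_term c \<xi>)
  have "trig_poly (\<lambda>w. c * (cos (\<xi> \<bullet> w) * g w))" by (intro trig_poly_cmult trig_poly_mult_cos cos_term)
  then show ?case by (simp add: mult.assoc)
next
  case (sin_term c \<xi>)
  have "trig_poly (\<lambda>w. c * (sin (\<xi> \<bullet> w) * g w))" by (intro trig_poly_cmult trig_poly_mult_sin sin_term)
  then show ?case by (simp add: mult.assoc)
next
  case (add f1 f2) then show ?case using trig_poly.add by (simp add: distrib_right)
qed

lemma trig_poly_sum:
  "finite I \<Longrightarrow> (\<And>i. i \<in> I \<Longrightarrow> trig_poly (F i)) \<Longrightarrow> trig_poly (\<lambda>w. \<Sum>i\<in>I. F i w)"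
  by (induction I rule: finite_induct) (auto intro: trig_poly_const trig_poly.add)

lemma trig_poly_compose_polynomial:
  "real_polynomial_function q \<Longrightarrow> trig_poly r \<Longrightarrow> trig_poly (\<lambda>w. q (r w))"
proof (induction rule: real_polynomial_function.induct)
  case (linear f)
  then obtain c where "f = (\<lambda>x. x * c)" using real_bounded_linear by blast
  then show ?case using trig_poly_cmult[OF linear.prems, of c] by (simp add: mult.commute)
qed (auto intro: trig_poly_const trig_poly.add trig_poly_mult)

lemma trig_poly_measurable: "trig_poly f \<Longrightarrow> f \<in> borel_measurable borel"
  by (induction rule: trig_poly.induct) auto

definition vanishing_fourier :: "('a::euclidean_space \<Rightarrow> real) \<Rightarrow> bool" where
  "vanishing_fourier \<psi> \<longleftrightarrow> integrable lborel \<psi> \<and>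
     (\<forall>\<xi>. (\<integral>w. \<psi> w * cos (\<xi> \<bullet> w) \<partial>lborel) = 0 \<and> (\<integral>w. \<psi> w * sin (\<xi> \<bullet> w) \<partial>lborel) = 0)"

lemma vanishing_fourier_trig_poly:
  assumes \<psi>: "vanishing_fourier \<psi>" and p: "trig_poly p"
  shows "integrable lborel (\<lambda>w. \<psi> w * p w) \<and> (\<integral>w. \<psi> w * p w \<partial>lborel) = 0"
  using p
proof (induction rule: trig_poly.induct)
  case (cos_term c \<xi>)
  have "integrable lborel (\<lambda>w. \<psi> w * cos (\<xi> \<bullet> w))"
    using \<psi> by (intro integrable_mult_bounded[where B = 1]) (auto simp: vanishing_fourier_def)
  then show ?case using \<psi> by (simp add: vanishing_fourier_def mult.left_commute)
next
  case (sin_term c \<xi>)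
  have "integrable lborel (\<lambda>w. \<psi> w * sin (\<xi> \<bullet> w))"
    using \<psi> by (intro integrable_mult_bounded[where B = 1]) (auto simp: vanishing_fourier_def)
  then show ?case using \<psi> by (simp add: vanishing_fourier_def mult.left_commute)
next
  case (add f g) then show ?case by (simp add: distrib_left)
qed

lemma vanishing_fourier_uniform_trig_limit:
  assumes \<psi>: "vanishing_fourier \<psi>"
    and G: "G \<in> borel_measurable borel" "\<And>w. \<bar>G w\<bar> \<le> B"
    and approx: "\<And>e. 0 < e \<Longrightarrow> \<exists>p. trig_poly p \<and> (\<forall>w. \<bar>G w - p w\<bar> \<le> e)"
  shows "(\<integral>w. \<psi> w * G w \<partial>lborel) = 0"
proof -
  have int: "integrable lborel \<psi>" using \<psi> by (simp add: vanishing_fourier_def)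
  have iG: "integrable lborel (\<lambda>w. \<psi> w * G w)" by (rule integrable_mult_bounded) (use int G in auto)
  define A where "A = (\<integral>w. \<bar>\<psi> w\<bar> \<partial>lborel)"
  have A: "0 \<le> A" by (simp add: A_def)
  have "\<bar>\<integral>w. \<psi> w * G w \<partial>lborel\<bar> \<le> 0 + e" if "0 < e" for e
  proof -
    have "0 < e / (A + 1)" using that A by simp
    then obtain p where p: "trig_poly p" "\<And>w. \<bar>G w - p w\<bar> \<le> e / (A + 1)" using approx by blast
    note p_int = vanishing_fourier_trig_poly[OF \<psi> p(1)]
    have "(\<integral>w. \<psi> w * G w \<partial>lborel) = (\<integral>w. \<psi> w * (G w - p w) \<partial>lborel)"
      using iG p_int by (simp add: right_diff_distrib)
    also have "\<bar>\<dots>\<bar> \<le> (\<integral>w. \<bar>\<psi> w\<bar> * (e / (A + 1)) \<partial>lborel)"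
    proof (rule integral_abs_bound_integral)
      show "integrable lborel (\<lambda>w. \<psi> w * (G w - p w))"
        using iG p_int by (simp add: right_diff_distrib)
      show "\<bar>\<psi> w * (G w - p w)\<bar> \<le> \<bar>\<psi> w\<bar> * (e / (A + 1))" for w
        unfolding abs_mult by (intro mult_left_mono p(2)) simp
    qed (use int in simp)
    also have "\<dots> = A * e / (A + 1)" by (simp add: A_def)
    also have "\<dots> \<le> e" using that A by (simp add: field_simps)
    finally show ?thesis by simp
  qed
  then show ?thesis using field_le_epsilon[of "\<bar>\<integral>w. \<psi> w * G w \<partial>lborel\<bar>" 0] by simp
qed

definition scaled_sin :: "nat \<Rightarrow> real \<Rightarrow> real" where
  "scaled_sin k x = real k * sin (x / real k)"

lemma abs_scaled_sin_le: "\<bar>scaled_sin k x\<bar> \<le> \<bar>x\<bar>"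
proof (cases "k = 0")
  case False
  then have "real k * \<bar>sin (x / real k)\<bar> \<le> real k * \<bar>x / real k\<bar>"
    by (intro mult_left_mono abs_sin_x_le_abs_x) auto
  then show ?thesis using False by (simp add: scaled_sin_def abs_mult)
qed (simp add: scaled_sin_def)

lemma abs_scaled_sin_le_index: "\<bar>scaled_sin k x\<bar> \<le> real k"
  by (simp add: scaled_sin_def abs_mult mult_left_le)

lemma scaled_sin_tendsto: "(\<lambda>k. scaled_sin k x) \<longlonglongrightarrow> x"
proof -
  consider "x > 0" | "x < 0" | "x = 0" by linarith
  then show ?thesis unfolding scaled_sin_def by cases (real_asymp, real_asymp, simp)
qed

lemma trig_poly_scaled_sin: "trig_poly (\<lambda>w. scaled_sin k (w \<bullet> b))"
  using trig_poly.sin_term[of "real k" "(1 / real k) *\<^sub>R b"]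
  by (simp add: scaled_sin_def inner_commute divide_inverse mult.commute)

definition sin_inner :: "'a::euclidean_space \<Rightarrow> nat \<Rightarrow> 'a \<Rightarrow> real" where
  "sin_inner u k w = (\<Sum>b\<in>Basis. (u \<bullet> b) * scaled_sin k (w \<bullet> b))"

definition sin_norm2 :: "nat \<Rightarrow> 'a::euclidean_space \<Rightarrow> real" where
  "sin_norm2 k w = (\<Sum>b\<in>Basis. (scaled_sin k (w \<bullet> b))\<^sup>2)"

definition ball_cutoff :: "nat \<Rightarrow> real \<Rightarrow> real \<Rightarrow> real" where
  "ball_cutoff k R q = max 0 (min 1 (1 - real k * (q - R\<^sup>2)))"

text \<open>As \<open>k \<rightarrow> \<infinity>\<close>, \<open>odd_ball_approx u R k\<close> tends pointwise to \<open>(u \<bullet> w) \<one>\<^sub>B\<^sub>R(w)\<close>, and each term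
  is a uniform limit of trigonometric polynomials: the cutoff is only evaluated on the compact range
  of \<open>sin_norm2 k\<close>, where Stone--Weierstrass applies.\<close>

definition odd_ball_approx :: "'a::euclidean_space \<Rightarrow> real \<Rightarrow> nat \<Rightarrow> 'a \<Rightarrow> real" where
  "odd_ball_approx u R k w = sin_inner u k w * ball_cutoff k R (sin_norm2 k w)"

lemma trig_poly_sin_inner: "trig_poly (sin_inner u k)"
  unfolding sin_inner_def by (intro trig_poly_sum trig_poly_cmult trig_poly_scaled_sin) simp

lemma trig_poly_sin_norm2: "trig_poly (sin_norm2 k)"
  unfolding sin_norm2_def power2_eq_square
  by (intro trig_poly_sum trig_poly_mult trig_poly_scaled_sin) simp

lemma abs_sin_inner_le: "\<bar>sin_inner u k w\<bar> \<le> (\<Sum>b\<in>Basis. \<bar>u \<bullet> b\<bar>) * B"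
  if "\<And>b. b \<in> Basis \<Longrightarrow> \<bar>scaled_sin k (w \<bullet> b)\<bar> \<le> B"
proof -
  have "\<bar>sin_inner u k w\<bar> \<le> (\<Sum>b\<in>Basis. \<bar>u \<bullet> b\<bar> * \<bar>scaled_sin k (w \<bullet> b)\<bar>)"
    unfolding sin_inner_def abs_mult[symmetric] by (rule sum_abs)
  also have "\<dots> \<le> (\<Sum>b\<in>Basis. \<bar>u \<bullet> b\<bar> * B)" by (intro sum_mono mult_left_mono that) auto
  finally show ?thesis by (simp add: sum_distrib_right)
qed

lemma sin_norm2_bounds: "0 \<le> sin_norm2 k w" "sin_norm2 k w \<le> (norm w)\<^sup>2"
  "sin_norm2 k w \<le> real DIM('a) * (real k)\<^sup>2" for w :: "'a::euclidean_space"
proof -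
  show "0 \<le> sin_norm2 k w" by (simp add: sin_norm2_def sum_nonneg)
  have "sin_norm2 k w \<le> (\<Sum>b\<in>(Basis::'a set). (w \<bullet> b)\<^sup>2)"
    unfolding sin_norm2_def by (intro sum_mono) (metis abs_le_square_iff abs_scaled_sin_le)
  then show "sin_norm2 k w \<le> (norm w)\<^sup>2" by (simp add: sum_Basis_inner_squared)
  have "sin_norm2 k w \<le> (\<Sum>b\<in>(Basis::'a set). (real k)\<^sup>2)"
    unfolding sin_norm2_def by (intro sum_mono) (metis abs_le_square_iff abs_of_nat abs_scaled_sin_le_index)
  then show "sin_norm2 k w \<le> real DIM('a) * (real k)\<^sup>2" by simp
qed

lemma odd_ball_approx_measurable: "odd_ball_approx u R k \<in> borel_measurable borel"
proof -
  have "ball_cutoff k R \<in> borel_measurable borel" unfolding ball_cutoff_def by measurable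
  then show ?thesis unfolding odd_ball_approx_def
    using trig_poly_measurable[OF trig_poly_sin_inner] trig_poly_measurable[OF trig_poly_sin_norm2]
    by measurable
qed

lemma abs_odd_ball_approx_le:
  assumes "0 < R"
  shows "\<bar>odd_ball_approx u R k w\<bar> \<le> (\<Sum>b\<in>Basis. \<bar>u \<bullet> b\<bar>) * (R + 1)"
proof (cases "k = 0 \<or> ball_cutoff k R (sin_norm2 k w) = 0")
  case True
  then show ?thesis using assms
    by (auto simp: odd_ball_approx_def sin_inner_def scaled_sin_def intro!: sum_nonneg)
next
  case False
  then have "real k * (sin_norm2 k w - R\<^sup>2) < 1" "1 \<le> real k"
    by (auto simp: ball_cutoff_def max_def min_def split: if_splits)
  then have "sin_norm2 k w - R\<^sup>2 < 1"
    using mult_right_mono[of 1 "real k" "sin_norm2 k w - R\<^sup>2"] by (cases "0 \<le> sin_norm2 k w - R\<^sup>2") auto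
  then have "sin_norm2 k w \<le> (R + 1)\<^sup>2"
    using assms by (simp add: power2_sum)
  have "\<bar>scaled_sin k (w \<bullet> b)\<bar> \<le> R + 1" if "b \<in> Basis" for b
  proof (rule power2_le_imp_le)
    have "(scaled_sin k (w \<bullet> b))\<^sup>2 \<le> sin_norm2 k w"
      unfolding sin_norm2_def using that by (intro member_le_sum) auto
    then show "\<bar>scaled_sin k (w \<bullet> b)\<bar>\<^sup>2 \<le> (R + 1)\<^sup>2"
      using \<open>sin_norm2 k w \<le> (R + 1)\<^sup>2\<close> by simp
  qed (use assms in simp)
  then have "\<bar>sin_inner u k w\<bar> \<le> (\<Sum>b\<in>Basis. \<bar>u \<bullet> b\<bar>) * (R + 1)" by (rule abs_sin_inner_le)
  moreover have "\<bar>sin_inner u k w\<bar> * \<bar>ball_cutoff k R (sin_norm2 k w)\<bar> \<le> \<bar>sin_inner u k w\<bar>"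
    by (intro mult_left_le) (auto simp: ball_cutoff_def)
  ultimately show ?thesis unfolding odd_ball_approx_def abs_mult by linarith
qed

lemma odd_ball_approx_uniform_trig_limit:
  assumes "0 < e"
  shows "\<exists>p. trig_poly p \<and> (\<forall>w. \<bar>odd_ball_approx u R k w - p w\<bar> \<le> e)"
proof -
  define U where "U = (\<Sum>b\<in>Basis. \<bar>u \<bullet> b\<bar>)"
  have kU: "0 \<le> real k * U" by (simp add: U_def sum_nonneg)
  define e' where "e' = e / (real k * U + 1)"
  have e': "0 < e'" unfolding e'_def using assms kU by simp
  have "continuous_on {0..real DIM('a) * (real k)\<^sup>2} (ball_cutoff k R)"
    unfolding ball_cutoff_def by (intro continuous_intros)
  then obtain q where q: "real_polynomial_function q"
    "\<And>r. r \<in> {0..real DIM('a) * (real k)\<^sup>2} \<Longrightarrow> \<bar>ball_cutoff k R r - q r\<bar> < e'"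
    using Stone_Weierstrass_real_polynomial_function[OF compact_Icc _ e'] by blast
  have "\<bar>odd_ball_approx u R k w - sin_inner u k w * q (sin_norm2 k w)\<bar> \<le> e" for w
  proof -
    have "\<bar>ball_cutoff k R (sin_norm2 k w) - q (sin_norm2 k w)\<bar> \<le> e'"
      using q(2) sin_norm2_bounds[of k w] by (simp add: less_imp_le)
    moreover have "\<bar>sin_inner u k w\<bar> \<le> real k * U"
      using abs_sin_inner_le[of k w "real k" u] abs_scaled_sin_le_index by (simp add: U_def mult.commute)
    ultimately have "\<bar>sin_inner u k w\<bar> * \<bar>ball_cutoff k R (sin_norm2 k w) - q (sin_norm2 k w)\<bar>
        \<le> (real k * U) * e'" by (intro mult_mono) auto
    also have "\<dots> \<le> e"
      unfolding e'_def using assms kU by (simp add: field_simps)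
    finally have "\<bar>sin_inner u k w\<bar> * \<bar>ball_cutoff k R (sin_norm2 k w) - q (sin_norm2 k w)\<bar> \<le> e" .
    moreover have "odd_ball_approx u R k w - sin_inner u k w * q (sin_norm2 k w)
        = sin_inner u k w * (ball_cutoff k R (sin_norm2 k w) - q (sin_norm2 k w))"
      by (simp add: odd_ball_approx_def right_diff_distrib)
    ultimately show ?thesis by (simp add: abs_mult)
  qed
  moreover have "trig_poly (\<lambda>w. sin_inner u k w * q (sin_norm2 k w))"
    by (rule trig_poly_mult[OF trig_poly_sin_inner trig_poly_compose_polynomial[OF q(1) trig_poly_sin_norm2]])
  ultimately show ?thesis by blast
qed

lemma odd_ball_approx_tendsto:
  assumes "0 < R"
  shows "(\<lambda>k. odd_ball_approx u R k w) \<longlonglongrightarrow> (u \<bullet> w) * indicator (cball 0 R) w"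
proof -
  have "(\<lambda>k. sin_inner u k w) \<longlonglongrightarrow> (\<Sum>b\<in>Basis. (u \<bullet> b) * (w \<bullet> b))"
    unfolding sin_inner_def by (intro tendsto_intros scaled_sin_tendsto)
  then have inner: "(\<lambda>k. sin_inner u k w) \<longlonglongrightarrow> u \<bullet> w" by (simp add: euclidean_inner[of u w])
  have "(\<lambda>k. sin_norm2 k w) \<longlonglongrightarrow> (\<Sum>b\<in>Basis. (w \<bullet> b)\<^sup>2)"
    unfolding sin_norm2_def by (intro tendsto_intros scaled_sin_tendsto)
  then have norm2: "(\<lambda>k. sin_norm2 k w) \<longlonglongrightarrow> (norm w)\<^sup>2" by (simp add: sum_Basis_inner_squared)
  have cutoff: "(\<lambda>k. ball_cutoff k R (sin_norm2 k w)) \<longlonglongrightarrow> indicator (cball 0 R) w"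
  proof (cases "norm w \<le> R")
    case True
    then have "(norm w)\<^sup>2 \<le> R\<^sup>2" by (simp add: power_mono)
    then have "sin_norm2 k w \<le> R\<^sup>2" for k using sin_norm2_bounds(2)[of k w] by linarith
    then have "ball_cutoff k R (sin_norm2 k w) = 1" for k
      by (simp add: ball_cutoff_def mult_nonneg_nonpos)
    then show ?thesis using True by simp
  next
    case False
    define \<delta> where "\<delta> = ((norm w)\<^sup>2 - R\<^sup>2) / 2"
    have \<delta>: "0 < \<delta>" unfolding \<delta>_def using False assms by (simp add: power_strict_mono)
    have "R\<^sup>2 + \<delta> < (norm w)\<^sup>2" using \<delta> unfolding \<delta>_def by (simp add: field_simps)
    then have "eventually (\<lambda>k. R\<^sup>2 + \<delta> < sin_norm2 k w) sequentially"
      by (rule order_tendstoD(1)[OF norm2])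
    moreover have "eventually (\<lambda>k. 1 < real k * \<delta>) sequentially"
      using \<delta> by real_asymp
    ultimately have "eventually (\<lambda>k. ball_cutoff k R (sin_norm2 k w) = 0) sequentially"
    proof eventually_elim
      case (elim k)
      then have "real k * \<delta> \<le> real k * (sin_norm2 k w - R\<^sup>2)" by (intro mult_left_mono) auto
      then show ?case using elim(2) by (simp add: ball_cutoff_def)
    qed
    then show ?thesis using False by (simp add: tendsto_eventually)
  qed
  show ?thesis unfolding odd_ball_approx_def by (intro tendsto_mult inner cutoff)
qed

lemma vanishing_fourier_odd_ball_moment:
  assumes \<psi>: "vanishing_fourier \<psi>" and R: "0 < R"
  shows "(\<integral>w. \<psi> w * ((u \<bullet> w) * indicator (cball 0 R) w) \<partial>lborel) = 0"
proof -
  define U where "U = (\<Sum>b\<in>Basis. \<bar>u \<bullet> b\<bar>)"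
  have int: "integrable lborel \<psi>" using \<psi> by (simp add: vanishing_fourier_def)
  then have [measurable]: "\<psi> \<in> borel_measurable borel" by (simp add: borel_measurable_integrable)
  note approx_meas[measurable] = odd_ball_approx_measurable
  have "(\<lambda>k. \<integral>w. \<psi> w * odd_ball_approx u R k w \<partial>lborel)
      \<longlonglongrightarrow> (\<integral>w. \<psi> w * ((u \<bullet> w) * indicator (cball 0 R) w) \<partial>lborel)"
  proof (rule integral_dominated_convergence[where w = "\<lambda>w. \<bar>\<psi> w\<bar> * (U * (R + 1))"])
    show "AE w in lborel. (\<lambda>k. \<psi> w * odd_ball_approx u R k w)
        \<longlonglongrightarrow> \<psi> w * ((u \<bullet> w) * indicator (cball 0 R) w)"
      by (intro AE_I2 tendsto_mult tendsto_const odd_ball_approx_tendsto R)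
    show "AE w in lborel. norm (\<psi> w * odd_ball_approx u R k w) \<le> \<bar>\<psi> w\<bar> * (U * (R + 1))" for k
      by (auto simp: U_def abs_mult intro!: mult_left_mono abs_odd_ball_approx_le[OF R])
    show "integrable lborel (\<lambda>w. \<bar>\<psi> w\<bar> * (U * (R + 1)))" using int by simp
    show "(\<lambda>w. \<psi> w * ((u \<bullet> w) * indicator (cball 0 R) w)) \<in> borel_measurable lborel"
      by measurable
    show "(\<lambda>w. \<psi> w * odd_ball_approx u R k w) \<in> borel_measurable lborel" for k
      by measurable
  qed
  moreover have "(\<integral>w. \<psi> w * odd_ball_approx u R k w \<partial>lborel) = 0" for k
    using vanishing_fourier_uniform_trig_limit[OF \<psi> approx_meas abs_odd_ball_approx_le[OF R]
        odd_ball_approx_uniform_trig_limit] .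
  ultimately show ?thesis by (simp add: LIMSEQ_const_iff)
qed

section \<open>Moments of the fractional heat kernel\<close>

lemma integrable_ball_second_moment:
  fixes f :: "'a::euclidean_space \<Rightarrow> real"
  assumes "integrable lborel f"
  shows "integrable lborel (\<lambda>w. indicator (cball 0 R) w * f w * (norm w)\<^sup>2)"
proof -
  have "integrable lborel (\<lambda>w. f w * (indicator (cball 0 R) w * (norm w)\<^sup>2))"
    using assms by (intro integrable_mult_bounded[where B = "R\<^sup>2"])
      (auto simp: indicator_def intro: power_mono)
  then show ?thesis by (simp add: mult_ac)
qed

lemma frac_heat_kernel_D:
  assumes "frac_heat_kernel s t phi"
  shows "phi \<in> borel_measurable borel" "\<And>w. 0 \<le> phi w" "integrable lborel phi"
    "(\<integral>w. phi w \<partial>lborel) = 1"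
  using assms unfolding frac_heat_kernel_def by auto

lemma frac_heat_kernel_cos_sin:
  fixes phi :: "'a::euclidean_space \<Rightarrow> real"
  assumes "frac_heat_kernel s t phi"
  shows "(\<integral>w. phi w * cos (\<xi> \<bullet> w) \<partial>lborel) = exp (- (t * norm \<xi> powr (2 * s)))"
    and "(\<integral>w. phi w * sin (\<xi> \<bullet> w) \<partial>lborel) = 0"
proof -
  let ?F = "\<lambda>w. complex_of_real (phi w) * cis (- (\<xi> \<bullet> w))"
  have F: "integrable lborel ?F"
    and F_integral: "(\<integral>w. ?F w \<partial>lborel) = complex_of_real (exp (- (t * norm \<xi> powr (2 * s))))"
    using assms unfolding frac_heat_kernel_def by auto
  show "(\<integral>w. phi w * cos (\<xi> \<bullet> w) \<partial>lborel) = exp (- (t * norm \<xi> powr (2 * s)))"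
    using integral_Re[OF F] F_integral by simp
  show "(\<integral>w. phi w * sin (\<xi> \<bullet> w) \<partial>lborel) = 0"
    using integral_Im[OF F] F_integral by simp
qed

lemma frac_heat_kernel_one_minus_cos:
  fixes phi :: "'a::euclidean_space \<Rightarrow> real"
  assumes fhk: "frac_heat_kernel s t phi"
  shows "integrable lborel (\<lambda>w. phi w * (1 - cos (\<xi> \<bullet> w)))"
    and "(\<integral>w. phi w * (1 - cos (\<xi> \<bullet> w)) \<partial>lborel) \<le> t * norm \<xi> powr (2 * s)"
proof -
  note phi = frac_heat_kernel_D[OF fhk]
  have cos_int: "integrable lborel (\<lambda>w. phi w * cos (\<xi> \<bullet> w))"
    by (rule integrable_mult_bounded[where B = 1]) (use phi in auto)
  then show "integrable lborel (\<lambda>w. phi w * (1 - cos (\<xi> \<bullet> w)))"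
    using phi(3) by (simp add: right_diff_distrib)
  have "(\<integral>w. phi w * (1 - cos (\<xi> \<bullet> w)) \<partial>lborel) = 1 - exp (- (t * norm \<xi> powr (2 * s)))"
    using phi(3,4) cos_int frac_heat_kernel_cos_sin(1)[OF fhk] by (simp add: right_diff_distrib)
  also have "\<dots> \<le> t * norm \<xi> powr (2 * s)"
    using exp_ge_add_one_self[of "- (t * norm \<xi> powr (2 * s))"] by simp
  finally show "(\<integral>w. phi w * (1 - cos (\<xi> \<bullet> w)) \<partial>lborel) \<le> t * norm \<xi> powr (2 * s)" .
qed

definition trunc_mass :: "('a::euclidean_space \<Rightarrow> real) \<Rightarrow> real \<Rightarrow> real" where
  "trunc_mass phi R = (\<integral>w. indicator (cball 0 R) w * phi w \<partial>lborel)"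

definition trunc_second_moment :: "('a::euclidean_space \<Rightarrow> real) \<Rightarrow> real \<Rightarrow> real" where
  "trunc_second_moment phi R = (\<integral>w. indicator (cball 0 R) w * phi w * (norm w)\<^sup>2 \<partial>lborel) / trunc_mass phi R"

lemma nn_integral_trunc_kernel:
  assumes "\<And>w. 0 \<le> phi w" "integrable lborel phi"
  shows "(\<integral>\<^sup>+w. ennreal (indicator (cball 0 R) w * phi w) \<partial>lborel) = ennreal (trunc_mass phi R)"
  unfolding trunc_mass_def using integrable_mult_indicator[of "cball 0 R" lborel phi] assms
  by (intro nn_integral_eq_integral) auto

lemma trunc_mass_add_tail:
  assumes "integrable lborel phi"
  shows "trunc_mass phi R + (\<integral>w. indicator (- cball 0 R) w * phi w \<partial>lborel) = (\<integral>w. phi w \<partial>lborel)"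
proof -
  have int: "integrable lborel (\<lambda>w. indicator A w * phi w)" if "A \<in> sets borel" for A :: "'a set"
    using integrable_mult_indicator[of A lborel phi] that assms by simp
  have "trunc_mass phi R + (\<integral>w. indicator (- cball 0 R) w * phi w \<partial>lborel)
      = (\<integral>w. indicator (cball 0 R) w * phi w + indicator (- cball 0 R) w * phi w \<partial>lborel)"
    unfolding trunc_mass_def by (intro Bochner_Integration.integral_add[symmetric] int) measurable
  also have "\<dots> = (\<integral>w. phi w \<partial>lborel)"
    by (rule Bochner_Integration.integral_cong) (auto simp: indicator_def)
  finally show ?thesis .
qed

lemma ball_second_moment_le_trunc_mass:
  fixes phi :: "'a::euclidean_space \<Rightarrow> real"
  assumes "\<And>w. 0 \<le> phi w" "integrable lborel phi"
  shows "(\<integral>w. indicator (cball 0 R) w * phi w * (norm w)\<^sup>2 \<partial>lborel) \<le> R\<^sup>2 * trunc_mass phi R"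
proof -
  have "indicator (cball 0 R) w * phi w * (norm w)\<^sup>2 \<le> R\<^sup>2 * (indicator (cball 0 R) w * phi w)" for w
  proof (cases "w \<in> cball 0 R")
    case True
    then have "phi w * (norm w)\<^sup>2 \<le> phi w * R\<^sup>2"
      using assms(1) by (intro mult_left_mono power_mono) auto
    then show ?thesis using True by (simp add: mult_ac)
  qed simp
  then have "(\<integral>w. indicator (cball 0 R) w * phi w * (norm w)\<^sup>2 \<partial>lborel)
      \<le> (\<integral>w. R\<^sup>2 * (indicator (cball 0 R) w * phi w) \<partial>lborel)"
    using integrable_mult_indicator[of "cball 0 R" lborel phi] assms(2) integrable_ball_second_moment[OF assms(2)]
    by (intro integral_mono) auto
  then show ?thesis unfolding trunc_mass_def by simp
qed

subsection \<open>The truncated kernel has no first moment\<close>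

lemma lborel_distr_uminus_euclidean: "distr lborel borel uminus = (lborel :: 'a::euclidean_space measure)"
proof -
  have "(lborel :: 'a measure)
      = density (distr lborel borel (\<lambda>x. 0 + (-1::real) *\<^sub>R x)) (\<lambda>x. ennreal (\<bar>-1::real\<bar> ^ DIM('a)))"
    by (rule lborel_affine) simp
  then show ?thesis by (simp add: density_1)
qed

lemma integral_reflect_lborel:
  fixes f :: "'a::euclidean_space \<Rightarrow> real"
  assumes "f \<in> borel_measurable borel"
  shows "integrable lborel (\<lambda>w. f (- w)) \<longleftrightarrow> integrable lborel f"
    and "(\<integral>w. f (- w) \<partial>lborel) = (\<integral>w. f w \<partial>lborel)"
  using integrable_distr_eq[of uminus lborel borel f] integral_distr[of uminus lborel borel f] assms
  by (simp_all add: lborel_distr_uminus_euclidean)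

lemma integral_reflect_mult:
  fixes phi T :: "'a::euclidean_space \<Rightarrow> real"
  assumes [measurable]: "phi \<in> borel_measurable borel" "T \<in> borel_measurable borel"
  shows "(\<integral>w. phi (- w) * T w \<partial>lborel) = (\<integral>w. phi w * T (- w) \<partial>lborel)"
  using integral_reflect_lborel(2)[of "\<lambda>w. phi w * T (- w)"] by simp

lemma frac_heat_kernel_odd_part_vanishing_fourier:
  fixes phi :: "'a::euclidean_space \<Rightarrow> real"
  assumes fhk: "frac_heat_kernel s t phi"
  shows "vanishing_fourier (\<lambda>w. phi w - phi (- w))"
proof -
  note phi = frac_heat_kernel_D[OF fhk]
  have phi_reflect: "integrable lborel (\<lambda>w. phi (- w))"
    using integral_reflect_lborel(1)[OF phi(1)] phi(3) by simp
  have int: "integrable lborel (\<lambda>w. g w * T w)" "integrable lborel (\<lambda>w. g (- w) * T w)"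
    if "g \<in> {phi}" "T \<in> {\<lambda>w. cos (\<xi> \<bullet> w), \<lambda>w. sin (\<xi> \<bullet> w)}" for g T \<xi>
    using that phi phi_reflect by (auto intro!: integrable_mult_bounded[where B = 1])
  have "(\<integral>w. (phi w - phi (- w)) * cos (\<xi> \<bullet> w) \<partial>lborel) = 0" for \<xi>
    using int[of phi "\<lambda>w. cos (\<xi> \<bullet> w)" \<xi>] integral_reflect_mult[OF phi(1), of "\<lambda>w. cos (\<xi> \<bullet> w)"]
    by (simp add: left_diff_distrib)
  moreover have "(\<integral>w. (phi w - phi (- w)) * sin (\<xi> \<bullet> w) \<partial>lborel) = 0" for \<xi>
    using int[of phi "\<lambda>w. sin (\<xi> \<bullet> w)" \<xi>] integral_reflect_mult[OF phi(1), of "\<lambda>w. sin (\<xi> \<bullet> w)"]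
      frac_heat_kernel_cos_sin(2)[OF fhk, of \<xi>]
    by (simp add: left_diff_distrib)
  ultimately show ?thesis
    unfolding vanishing_fourier_def using phi(3) phi_reflect by simp
qed

lemma frac_heat_kernel_ball_first_moment:
  fixes phi :: "'a::euclidean_space \<Rightarrow> real"
  assumes fhk: "frac_heat_kernel s t phi" and R: "0 < R"
  shows "(\<integral>w. indicator (cball 0 R) w * phi w * (u \<bullet> w) \<partial>lborel) = 0"
proof -
  note phi = frac_heat_kernel_D[OF fhk]
  define G where "G w = (u \<bullet> w) * indicator (cball 0 R) w" for w :: 'a
  have [measurable]: "G \<in> borel_measurable borel" unfolding G_def by measurable
  have G_bound: "\<bar>G w\<bar> \<le> norm u * R" for w
    using Cauchy_Schwarz_ineq2[of u w] R
    by (auto simp: G_def indicator_def intro: order_trans[OF _ mult_left_mono])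
  have phi_reflect: "integrable lborel (\<lambda>w. phi (- w))"
    using integral_reflect_lborel(1)[OF phi(1)] phi(3) by simp
  have int: "integrable lborel (\<lambda>w. phi w * G w)" "integrable lborel (\<lambda>w. phi (- w) * G w)"
    using phi phi_reflect G_bound by (auto intro!: integrable_mult_bounded)
  have "(\<integral>w. phi (- w) * G w \<partial>lborel) = - (\<integral>w. phi w * G w \<partial>lborel)"
    using integral_reflect_mult[OF phi(1), of G] by (simp add: G_def indicator_def)
  then have "(\<integral>w. (phi w - phi (- w)) * G w \<partial>lborel) = 2 * (\<integral>w. phi w * G w \<partial>lborel)"
    using int by (simp add: left_diff_distrib)
  moreover have "(\<integral>w. (phi w - phi (- w)) * G w \<partial>lborel) = 0"
    using vanishing_fourier_odd_ball_moment[OF frac_heat_kernel_odd_part_vanishing_fourier[OF fhk] R]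
    by (simp add: G_def)
  ultimately show ?thesis by (simp add: G_def mult_ac)
qed

lemma sin_ge_half_self:
  assumes "0 \<le> x" "x \<le> 1"
  shows "x / 2 \<le> sin (x::real)"
proof -
  have "sin 0 - 0 / 2 \<le> sin x - x / 2"
  proof (rule DERIV_nonneg_imp_nondecreasing[OF assms(1)])
    fix y assume y: "0 \<le> y" "y \<le> x"
    have "cos (pi / 3) \<le> cos y"
      using y assms pi_gt3 by (intro cos_monotone_0_pi_le) auto
    then show "\<exists>d. ((\<lambda>y. sin y - y / 2) has_real_derivative d) (at y) \<and> 0 \<le> d"
      by (auto intro!: exI derivative_eq_intros simp: cos_60)
  qed
  then show ?thesis by simp
qed

lemma square_le_8_one_minus_cos:
  assumes "\<bar>x\<bar> \<le> 2"
  shows "x\<^sup>2 \<le> 8 * (1 - cos (x::real))"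
proof -
  define y where "y = \<bar>x\<bar> / 2"
  have y: "0 \<le> y" "y \<le> 1" using assms unfolding y_def by auto
  have "1 - cos x = 2 * (sin y)\<^sup>2"
    using cos_double_sin[of y] unfolding y_def by (cases "0 \<le> x") auto
  moreover have "(y / 2)\<^sup>2 \<le> (sin y)\<^sup>2"
    using sin_ge_half_self[OF y] y by (intro power_mono) auto
  moreover have "x\<^sup>2 = 4 * y\<^sup>2" unfolding y_def by (simp add: power2_eq_square)
  ultimately show ?thesis by (simp add: power2_eq_square)
qed

lemma square_mult_powr_neg:
  fixes R s :: real
  assumes "0 < R"
  shows "R\<^sup>2 * R powr (- 2 * s) = R powr (2 - 2 * s)"
proof -
  have "R\<^sup>2 = R powr 2" using assms by (simp add: powr_numeral)
  then show ?thesis by (simp add: powr_add[symmetric])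
qed

lemma frac_heat_kernel_ball_second_moment:
  fixes phi :: "'a::euclidean_space \<Rightarrow> real"
  assumes fhk: "frac_heat_kernel s t phi" and R: "0 < R"
  shows "(\<integral>w. indicator (cball 0 R) w * phi w * (norm w)\<^sup>2 \<partial>lborel)
    \<le> 8 * real DIM('a) * t * R powr (2 - 2 * s)"
proof -
  note phi = frac_heat_kernel_D[OF fhk]
  define \<xi> where "\<xi> b = (1 / R) *\<^sub>R b" for b :: 'a
  have cosine_bound: "indicator (cball 0 R) w * (norm w)\<^sup>2 \<le> (\<Sum>b\<in>Basis. 8 * R\<^sup>2 * (1 - cos (\<xi> b \<bullet> w)))"
    for w
  proof (cases "w \<in> cball 0 R")
    case True
    have "(w \<bullet> b)\<^sup>2 \<le> 8 * R\<^sup>2 * (1 - cos (\<xi> b \<bullet> w))" if "b \<in> Basis" for b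
    proof -
      have "\<bar>w \<bullet> b\<bar> \<le> R" using Basis_le_norm[OF that, of w] True by simp
      then have "((w \<bullet> b) / R)\<^sup>2 \<le> 8 * (1 - cos ((w \<bullet> b) / R))"
        using R by (intro square_le_8_one_minus_cos) (simp add: abs_div divide_le_eq)
      then show ?thesis using R by (simp add: \<xi>_def inner_commute power_divide field_simps)
    qed
    then have "(\<Sum>b\<in>Basis. (w \<bullet> b)\<^sup>2) \<le> (\<Sum>b\<in>Basis. 8 * R\<^sup>2 * (1 - cos (\<xi> b \<bullet> w)))"
      by (rule sum_mono)
    then show ?thesis using True by (simp add: sum_Basis_inner_squared)
  qed (simp add: sum_nonneg)
  have int: "integrable lborel (\<lambda>w. phi w * (1 - cos (\<xi> b \<bullet> w)))" for b
    by (rule frac_heat_kernel_one_minus_cos(1)[OF fhk])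
  have "(\<integral>w. indicator (cball 0 R) w * phi w * (norm w)\<^sup>2 \<partial>lborel)
      \<le> (\<integral>w. (\<Sum>b\<in>Basis. 8 * R\<^sup>2 * (phi w * (1 - cos (\<xi> b \<bullet> w)))) \<partial>lborel)"
  proof (rule integral_mono)
    show "integrable lborel (\<lambda>w. indicator (cball 0 R) w * phi w * (norm w)\<^sup>2)"
      by (rule integrable_ball_second_moment[OF phi(3)])
    show "integrable lborel (\<lambda>w. \<Sum>b\<in>Basis. 8 * R\<^sup>2 * (phi w * (1 - cos (\<xi> b \<bullet> w))))"
      by (intro Bochner_Integration.integrable_sum integrable_mult_right int)
    show "indicator (cball 0 R) w * phi w * (norm w)\<^sup>2
        \<le> (\<Sum>b\<in>Basis. 8 * R\<^sup>2 * (phi w * (1 - cos (\<xi> b \<bullet> w))))" for w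
      using mult_left_mono[OF cosine_bound phi(2)] by (simp add: sum_distrib_left mult_ac)
  qed
  also have "\<dots> = (\<Sum>b\<in>Basis. 8 * R\<^sup>2 * (\<integral>w. phi w * (1 - cos (\<xi> b \<bullet> w)) \<partial>lborel))"
    using int by (simp add: Bochner_Integration.integral_sum integrable_mult_right)
  also have "\<dots> \<le> (\<Sum>b\<in>(Basis::'a set). 8 * R\<^sup>2 * (t * R powr (- 2 * s)))"
  proof (intro sum_mono mult_left_mono)
    fix b :: 'a assume "b \<in> Basis"
    then have "norm (\<xi> b) powr (2 * s) = R powr (- 2 * s)"
      using R by (simp add: \<xi>_def inverse_powr powr_minus divide_inverse)
    then show "(\<integral>w. phi w * (1 - cos (\<xi> b \<bullet> w)) \<partial>lborel) \<le> t * R powr (- 2 * s)"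
      using frac_heat_kernel_one_minus_cos(2)[OF fhk, of "\<xi> b"] by simp
  qed simp
  also have "\<dots> = 8 * real DIM('a) * t * R powr (2 - 2 * s)"
    using square_mult_powr_neg[OF R, of s] by (simp add: mult_ac)
  finally show ?thesis .
qed

lemma nn_integral_one_minus_cos:
  assumes a: "0 < a" and x: "x \<noteq> 0"
  shows "(\<integral>\<^sup>+\<tau>\<in>{0..a}. ennreal (1 - cos (\<tau> * x)) \<partial>lborel) = ennreal (a - sin (a * x) / x)"
proof -
  have "(\<integral>\<^sup>+\<tau>\<in>{0..a}. ennreal (1 - cos (\<tau> * x)) \<partial>lborel)
      = ennreal ((\<lambda>\<tau>. \<tau> - sin (\<tau> * x) / x) a - (\<lambda>\<tau>. \<tau> - sin (\<tau> * x) / x) 0)"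
    using a x by (intro nn_integral_FTC_Icc) (auto intro!: derivative_eq_intros)
  then show ?thesis by simp
qed

text \<open>Averaging \<open>1 - cos (\<tau> x)\<close> over the frequencies \<open>\<tau> \<in> [0, a]\<close> detects \<open>|x| > 2 / a\<close>;
  integrated against a probability density this is the classical truncation inequality
  bounding tails by the characteristic function near the origin.\<close>

lemma indicator_le_one_minus_cos_average:
  assumes a: "0 < a"
  shows "ennreal (indicator {y. 2 / a < \<bar>y\<bar>} x)
    \<le> ennreal (2 / a) * (\<integral>\<^sup>+\<tau>\<in>{0..a}. ennreal (1 - cos (\<tau> * x)) \<partial>lborel)"
proof (cases "2 / a < \<bar>x\<bar>")
  case True
  then have x: "x \<noteq> 0" using a by auto
  have "sin (a * x) / x \<le> \<bar>sin (a * x)\<bar> / \<bar>x\<bar>"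
    using abs_ge_self[of "sin (a * x) / x"] by (simp add: abs_div)
  also have "\<dots> \<le> 1 / \<bar>x\<bar>" by (intro divide_right_mono) auto
  also have "1 / \<bar>x\<bar> < a / 2" using True a x by (simp add: field_simps)
  finally have sin_small: "sin (a * x) / x < a / 2" .
  have "2 / a * (sin (a * x) / x) < 2 / a * (a / 2)"
    using sin_small a by (intro mult_strict_left_mono) auto
  then have "1 \<le> 2 / a * (a - sin (a * x) / x)" using a by (simp add: right_diff_distrib)
  moreover have "0 \<le> a - sin (a * x) / x" using sin_small a by linarith
  ultimately have "ennreal 1 \<le> ennreal (2 / a) * ennreal (a - sin (a * x) / x)"
    using a by (simp add: ennreal_mult[symmetric] ennreal_leI)
  then show ?thesis using True nn_integral_one_minus_cos[OF a x] by simp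
qed simp

lemma frac_heat_kernel_nn_integral_one_minus_cos:
  fixes phi :: "'a::euclidean_space \<Rightarrow> real"
  assumes fhk: "frac_heat_kernel s t phi" and t: "0 \<le> t" and s: "0 < s" and b: "norm b = 1"
    and \<tau>: "0 \<le> \<tau>" "\<tau> \<le> a"
  shows "(\<integral>\<^sup>+w. ennreal (phi w * (1 - cos ((\<tau> *\<^sub>R b) \<bullet> w))) \<partial>lborel) \<le> ennreal (t * a powr (2 * s))"
proof -
  have "(\<integral>\<^sup>+w. ennreal (phi w * (1 - cos ((\<tau> *\<^sub>R b) \<bullet> w))) \<partial>lborel)
      = ennreal (\<integral>w. phi w * (1 - cos ((\<tau> *\<^sub>R b) \<bullet> w)) \<partial>lborel)"
    by (rule nn_integral_eq_integral[OF frac_heat_kernel_one_minus_cos(1)[OF fhk]])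
      (use frac_heat_kernel_D(2)[OF fhk] in \<open>auto intro!: AE_I2\<close>)
  also have "\<dots> \<le> ennreal (t * \<tau> powr (2 * s))"
    using \<tau> b frac_heat_kernel_one_minus_cos(2)[OF fhk, of "\<tau> *\<^sub>R b"] by (simp add: ennreal_leI)
  also have "\<dots> \<le> ennreal (t * a powr (2 * s))"
    using \<tau> t s by (intro ennreal_leI mult_left_mono powr_mono2) auto
  finally show ?thesis .
qed

lemma frac_heat_kernel_coordinate_tail:
  fixes phi :: "'a::euclidean_space \<Rightarrow> real"
  assumes fhk: "frac_heat_kernel s t phi" and a: "0 < a" and t: "0 \<le> t" and s: "0 < s"
    and b: "norm b = 1"
  shows "(\<integral>\<^sup>+w. ennreal (phi w * indicator {w. 2 / a < \<bar>w \<bullet> b\<bar>} w) \<partial>lborel)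
    \<le> ennreal (2 * t * a powr (2 * s))"
proof -
  note phi = frac_heat_kernel_D[OF fhk]
  note [measurable] = phi(1)
  define g where "g \<tau> w = indicator {0..a} \<tau> * ennreal (phi w * (1 - cos ((\<tau> *\<^sub>R b) \<bullet> w)))"
    for \<tau> :: real and w :: 'a
  have g_measurable: "(\<lambda>(\<tau>, w). g \<tau> w) \<in> borel_measurable (lborel \<Otimes>\<^sub>M lborel)"
    unfolding g_def by measurable
  have "(\<integral>\<^sup>+w. ennreal (phi w * indicator {w. 2 / a < \<bar>w \<bullet> b\<bar>} w) \<partial>lborel)
     \<le> (\<integral>\<^sup>+w. ennreal (2 / a) * (\<integral>\<^sup>+\<tau>. g \<tau> w \<partial>lborel) \<partial>lborel)"
  proof (rule nn_integral_mono)
    fix w :: 'a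
    have "ennreal (phi w * indicator {w. 2 / a < \<bar>w \<bullet> b\<bar>} w)
        = ennreal (phi w) * ennreal (indicator {y. 2 / a < \<bar>y\<bar>} (w \<bullet> b))"
      using phi(2)[of w] by (simp add: ennreal_mult indicator_def)
    also have "\<dots> \<le> ennreal (phi w)
        * (ennreal (2 / a) * (\<integral>\<^sup>+\<tau>\<in>{0..a}. ennreal (1 - cos (\<tau> * (w \<bullet> b))) \<partial>lborel))"
      by (intro mult_left_mono indicator_le_one_minus_cos_average a) simp
    also have "\<dots> = ennreal (2 / a) * (\<integral>\<^sup>+\<tau>. g \<tau> w \<partial>lborel)"
      using phi(2)[of w]
      by (simp add: g_def nn_integral_cmult[symmetric] ennreal_mult mult_ac inner_commute)
    finally show "ennreal (phi w * indicator {w. 2 / a < \<bar>w \<bullet> b\<bar>} w)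
        \<le> ennreal (2 / a) * (\<integral>\<^sup>+\<tau>. g \<tau> w \<partial>lborel)" .
  qed
  also have "\<dots> = ennreal (2 / a) * (\<integral>\<^sup>+\<tau>. \<integral>\<^sup>+w. g \<tau> w \<partial>lborel \<partial>lborel)"
  proof -
    have "(\<integral>\<^sup>+w. \<integral>\<^sup>+\<tau>. g \<tau> w \<partial>lborel \<partial>lborel) = (\<integral>\<^sup>+\<tau>. \<integral>\<^sup>+w. g \<tau> w \<partial>lborel \<partial>lborel)"
      by (rule pair_sigma_finite.Fubini'[OF _ g_measurable])
        (simp add: pair_sigma_finite_def lborel.sigma_finite_measure_axioms)
    moreover have "(\<integral>\<^sup>+w. ennreal (2 / a) * (\<integral>\<^sup>+\<tau>. g \<tau> w \<partial>lborel) \<partial>lborel)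
        = ennreal (2 / a) * (\<integral>\<^sup>+w. \<integral>\<^sup>+\<tau>. g \<tau> w \<partial>lborel \<partial>lborel)"
      by (rule nn_integral_cmult) (use g_measurable in measurable)
    ultimately show ?thesis by simp
  qed
  also have "\<dots> \<le> ennreal (2 / a) * (\<integral>\<^sup>+\<tau>. ennreal (t * a powr (2 * s)) * indicator {0..a} \<tau> \<partial>lborel)"
  proof (intro mult_left_mono nn_integral_mono)
    fix \<tau> :: real
    show "(\<integral>\<^sup>+w. g \<tau> w \<partial>lborel) \<le> ennreal (t * a powr (2 * s)) * indicator {0..a} \<tau>"
    proof (cases "\<tau> \<in> {0..a}")
      case True
      then show ?thesis
        using frac_heat_kernel_nn_integral_one_minus_cos[OF fhk t s b, of \<tau> a] by (simp add: g_def)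
    qed (simp add: g_def)
  qed simp
  also have "\<dots> = ennreal (2 / a) * (ennreal (t * a powr (2 * s)) * ennreal a)"
    using a by (subst nn_integral_cmult_indicator) auto
  also have "\<dots> = ennreal (2 * t * a powr (2 * s))"
    using a t by (simp add: ennreal_mult[symmetric] field_simps)
  finally show ?thesis .
qed

lemma indicator_compl_cball_le_coordinates:
  fixes w :: "'a::euclidean_space"
  assumes R: "0 < R"
  shows "indicator (- cball 0 R) w \<le> (\<Sum>b\<in>Basis. indicator {w. R / sqrt DIM('a) < \<bar>w \<bullet> b\<bar>} w :: real)"
proof (cases "w \<in> cball 0 R")
  case False
  have "\<exists>b\<in>Basis. R / sqrt DIM('a) < \<bar>w \<bullet> b\<bar>"
  proof (rule ccontr)
    assume "\<not> ?thesis"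
    then have "(w \<bullet> b)\<^sup>2 \<le> (R / sqrt DIM('a))\<^sup>2" if "b \<in> Basis" for b
      using that power_mono[of "\<bar>w \<bullet> b\<bar>" "R / sqrt DIM('a)" 2] by auto
    then have "(norm w)\<^sup>2 \<le> DIM('a) * (R / sqrt DIM('a))\<^sup>2"
      unfolding sum_Basis_inner_squared[symmetric]
      using sum_mono[of Basis "\<lambda>b. (w \<bullet> b)\<^sup>2" "\<lambda>_. (R / sqrt DIM('a))\<^sup>2"] by simp
    also have "\<dots> = R\<^sup>2" by (simp add: power_divide)
    finally show False using False R by (simp add: abs_le_square_iff[symmetric])
  qed
  then obtain b where "b \<in> Basis" "R / sqrt DIM('a) < \<bar>w \<bullet> b\<bar>" by blast
  then have "1 \<le> (\<Sum>b\<in>Basis. indicator {w. R / sqrt DIM('a) < \<bar>w \<bullet> b\<bar>} w :: real)"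
    using member_le_sum[of b Basis "\<lambda>b. indicator {w. R / sqrt DIM('a) < \<bar>w \<bullet> b\<bar>} w :: real"] by simp
  then show ?thesis using False by simp
qed (simp add: sum_nonneg)

lemma frac_heat_kernel_ball_tail:
  fixes phi :: "'a::euclidean_space \<Rightarrow> real"
  assumes fhk: "frac_heat_kernel s t phi" and R: "0 < R" and t: "0 \<le> t" and s: "0 < s" "s \<le> 1"
  shows "(\<integral>w. indicator (- cball 0 R) w * phi w \<partial>lborel) \<le> 8 * (real DIM('a))\<^sup>2 * t * R powr (- 2 * s)"
proof -
  note phi = frac_heat_kernel_D[OF fhk]
  note [measurable] = phi(1)
  define D where "D = real DIM('a)"
  have D: "1 \<le> D" unfolding D_def by simp
  define a where "a = 2 * sqrt D / R"
  have a: "0 < a" unfolding a_def using R D by simp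
  have "2 / a = R / sqrt D" unfolding a_def using R D by simp
  then have coordinate_cover:
    "indicator (- cball 0 R) w * phi w \<le> (\<Sum>b\<in>(Basis::'a set). phi w * indicator {w. 2 / a < \<bar>w \<bullet> b\<bar>} w)"
    for w :: 'a
    using mult_right_mono[OF indicator_compl_cball_le_coordinates[OF R, of w] phi(2)]
    by (simp add: D_def sum_distrib_left mult.commute)
  have "ennreal (\<integral>w. indicator (- cball 0 R) w * phi w \<partial>lborel)
      = (\<integral>\<^sup>+w. ennreal (indicator (- cball 0 R) w * phi w) \<partial>lborel)"
    using integrable_mult_indicator[of "- cball 0 R" lborel phi] phi
    by (intro nn_integral_eq_integral[symmetric]) auto
  also have "\<dots> \<le> (\<integral>\<^sup>+w. (\<Sum>b\<in>(Basis::'a set). ennreal (phi w * indicator {w. 2 / a < \<bar>w \<bullet> b\<bar>} w)) \<partial>lborel)"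
    using coordinate_cover phi(2) by (intro nn_integral_mono) (simp add: sum_ennreal ennreal_leI)
  also have "\<dots> = (\<Sum>b\<in>(Basis::'a set). \<integral>\<^sup>+w. ennreal (phi w * indicator {w. 2 / a < \<bar>w \<bullet> b\<bar>} w) \<partial>lborel)"
    by (rule nn_integral_sum) measurable
  also have "\<dots> \<le> (\<Sum>b\<in>(Basis::'a set). ennreal (2 * t * a powr (2 * s)))"
    by (intro sum_mono frac_heat_kernel_coordinate_tail[OF fhk a t s(1)]) simp
  also have "\<dots> = ennreal (D * (2 * t * a powr (2 * s)))"
    unfolding D_def using t by (simp add: ennreal_mult ennreal_of_nat_eq_real_of_nat)
  finally have tail: "(\<integral>w. indicator (- cball 0 R) w * phi w \<partial>lborel) \<le> D * (2 * t * a powr (2 * s))"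
    using t a D by (subst (asm) ennreal_le_iff) auto
  have "a powr (2 * s) \<le> 4 * D * R powr (- 2 * s)"
  proof -
    have "1 \<le> sqrt D" using D by simp
    then have "1 \<le> 2 * sqrt D" by linarith
    moreover have "2 * s \<le> 2" using s by simp
    ultimately have "(2 * sqrt D) powr (2 * s) \<le> (2 * sqrt D) powr 2"
      by (intro powr_mono)
    also have "\<dots> = 4 * D" using D by (simp add: powr_numeral power_mult_distrib)
    finally have "(2 * sqrt D) powr (2 * s) * R powr (- 2 * s) \<le> 4 * D * R powr (- 2 * s)"
      by (simp add: mult_right_mono)
    moreover have "a powr (2 * s) = (2 * sqrt D) powr (2 * s) * R powr (- 2 * s)"
    proof -
      have "a powr (2 * s) = (2 * sqrt D) powr (2 * s) / R powr (2 * s)"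
        unfolding a_def using R D by (simp add: powr_divide)
      then show ?thesis using R by (simp add: powr_minus divide_inverse)
    qed
    ultimately show ?thesis by simp
  qed
  then have "D * (2 * t * a powr (2 * s)) \<le> D * (2 * t * (4 * D * R powr (- 2 * s)))"
    using t D by (intro mult_left_mono) auto
  with tail show ?thesis by (simp add: D_def power2_eq_square mult_ac)
qed

lemma frac_heat_kernel_trunc_second_moment:
  fixes phi :: "'a::euclidean_space \<Rightarrow> real"
  assumes fhk: "frac_heat_kernel s t phi" and R: "0 < R" and t: "0 \<le> t" and s: "0 < s" "s \<le> 1"
  shows "trunc_second_moment phi R \<le> 16 * (real DIM('a))\<^sup>2 * t * R powr (2 - 2 * s)"
proof -
  note phi = frac_heat_kernel_D[OF fhk]
  define D where "D = real DIM('a)"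
  have D: "1 \<le> D" unfolding D_def by simp
  define Z where "Z = trunc_mass phi R"
  define M where "M = (\<integral>w. indicator (cball 0 R) w * phi w * (norm w)\<^sup>2 \<partial>lborel)"
  have Z_tail: "1 - Z \<le> 8 * D\<^sup>2 * t * R powr (- 2 * s)"
    using trunc_mass_add_tail[OF phi(3), of R] frac_heat_kernel_ball_tail[OF fhk R t s] phi(4)
    unfolding D_def Z_def by simp
  have M_Z: "M \<le> R\<^sup>2 * Z"
    unfolding M_def Z_def by (rule ball_second_moment_le_trunc_mass[OF phi(2,3)])
  have M: "0 \<le> M" "M \<le> 8 * D * t * R powr (2 - 2 * s)"
    unfolding M_def D_def using frac_heat_kernel_ball_second_moment[OF fhk R] phi(2)
    by (auto intro!: integral_nonneg)
  have "M / Z \<le> 16 * D\<^sup>2 * t * R powr (2 - 2 * s)"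
  proof (cases "1/2 \<le> Z")
    case True
    then have "M / Z \<le> M / (1 / 2)" using M by (intro divide_left_mono) auto
    also have "\<dots> = 2 * M" by simp
    also have "\<dots> \<le> 16 * D * t * R powr (2 - 2 * s)" using M by simp
    also have "\<dots> \<le> 16 * D\<^sup>2 * t * R powr (2 - 2 * s)"
      using D t by (intro mult_right_mono) (auto simp: power2_eq_square)
    finally show ?thesis .
  next
    case False
    text \<open>Little mass in the ball forces a long tail, which makes the right-hand side at least \<open>R\<^sup>2\<close>.\<close>
    have "0 \<le> Z" unfolding Z_def trunc_mass_def by (intro integral_nonneg_AE AE_I2) (simp add: phi(2))
    then have "M / Z \<le> R\<^sup>2" using M_Z by (cases "Z = 0") (auto simp: divide_le_eq mult.commute)
    also have "\<dots> \<le> R\<^sup>2 * (16 * D\<^sup>2 * t * R powr (- 2 * s))"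
    proof -
      have "1 \<le> 16 * D\<^sup>2 * t * R powr (- 2 * s)" using Z_tail False by linarith
      then show ?thesis using mult_left_mono[of 1 _ "R\<^sup>2"] by simp
    qed
    also have "\<dots> = 16 * D\<^sup>2 * t * R powr (2 - 2 * s)"
      using square_mult_powr_neg[OF R, of s] by (simp add: mult_ac)
    finally show ?thesis .
  qed
  then show ?thesis unfolding M_def Z_def D_def trunc_second_moment_def .
qed

lemma P2a_iff_nn_integral:
  "g \<in> P2a \<longleftrightarrow> g \<in> borel_measurable borel \<and> (\<forall>z. 0 \<le> g z)
     \<and> (\<integral>\<^sup>+z. ennreal (g z) \<partial>lborel) = 1 \<and> (\<integral>\<^sup>+z. ennreal ((norm z)\<^sup>2 * g z) \<partial>lborel) < \<infinity>"
  (is "_ \<longleftrightarrow> ?meas \<and> ?nonneg \<and> ?mass \<and> ?moment")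
proof
  assume g: "g \<in> P2a"
  then have int: "integrable lborel g" "integrable lborel (\<lambda>z. (norm z)\<^sup>2 * g z)"
    and nonneg: "\<And>z. 0 \<le> g z"
    unfolding P2a_def by auto
  have "(\<integral>\<^sup>+z. ennreal (g z) \<partial>lborel) = ennreal (\<integral>z. g z \<partial>lborel)"
    "(\<integral>\<^sup>+z. ennreal ((norm z)\<^sup>2 * g z) \<partial>lborel) = ennreal (\<integral>z. (norm z)\<^sup>2 * g z \<partial>lborel)"
    using nonneg by (intro nn_integral_eq_integral int; simp)+
  then show "?meas \<and> ?nonneg \<and> ?mass \<and> ?moment"
    using g nonneg unfolding P2a_def by auto
next
  assume "?meas \<and> ?nonneg \<and> ?mass \<and> ?moment"
  then have [measurable]: "g \<in> borel_measurable borel" and ?nonneg ?mass ?moment by auto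
  then have "integrable lborel g" "integrable lborel (\<lambda>z. (norm z)\<^sup>2 * g z)"
    by (auto intro!: integrableI_nonneg)
  moreover have "(\<integral>z. g z \<partial>lborel) = 1"
    using \<open>?nonneg\<close> \<open>?mass\<close> by (subst integral_eq_nn_integral) auto
  ultimately show "g \<in> P2a" using \<open>?nonneg\<close> by (simp add: P2a_def)
qed

lemma P2a_D:
  assumes "g \<in> P2a"
  shows "g \<in> borel_measurable borel" "\<And>z. 0 \<le> g z" "(\<integral>\<^sup>+z. ennreal (g z) \<partial>lborel) = 1"
    "(\<integral>\<^sup>+z. ennreal ((norm z)\<^sup>2 * g z) \<partial>lborel) < \<infinity>"
  using assms unfolding P2a_iff_nn_integral by blast+

lemma measurable_compose_continuous:
  "continuous_on UNIV g \<Longrightarrow> f \<in> borel_measurable borel \<Longrightarrow> (\<lambda>x. f (g x)) \<in> borel_measurable borel"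
  using measurable_compose[OF borel_measurable_continuous_onI] by blast

lemma nn_integral_lborel_translate:
  fixes H :: "'a::euclidean_space \<Rightarrow> ennreal"
  assumes "H \<in> borel_measurable borel"
  shows "(\<integral>\<^sup>+z. H (c + z) \<partial>lborel) = (\<integral>\<^sup>+z. H z \<partial>lborel)"
  using nn_integral_distr[of "(+) c" lborel borel H] assms by (simp add: lborel_distr_plus)

lemma nn_integral_lborel_pair:
  fixes H :: "'a::euclidean_space \<times> 'b::euclidean_space \<Rightarrow> ennreal"
  assumes "H \<in> borel_measurable borel"
  shows "(\<integral>\<^sup>+z. H z \<partial>lborel) = (\<integral>\<^sup>+v. \<integral>\<^sup>+x. H (x, v) \<partial>lborel \<partial>lborel)"
  using lborel_pair.nn_integral_snd[of H] assms by (simp add: lborel_prod)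

lemma nn_integral_shear:
  fixes G g :: "'a::euclidean_space \<times> 'a \<Rightarrow> ennreal"
  assumes G: "G \<in> borel_measurable borel" and g: "g \<in> borel_measurable borel"
  shows "(\<integral>\<^sup>+z. G z * g (fst z - h *\<^sub>R snd z, snd z) \<partial>lborel)
    = (\<integral>\<^sup>+z. G (fst z + h *\<^sub>R snd z, snd z) * g z \<partial>lborel)"
proof -
  have shifted: "(\<lambda>z::'a \<times> 'a. g (fst z - h *\<^sub>R snd z, snd z)) \<in> borel_measurable borel"
      "(\<lambda>z::'a \<times> 'a. G (fst z + h *\<^sub>R snd z, snd z)) \<in> borel_measurable borel"
    by (rule measurable_compose_continuous[OF _ g] measurable_compose_continuous[OF _ G];
        intro continuous_intros)+
  have slice: "(\<lambda>x. F (x + c, v)) \<in> borel_measurable borel"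
    if "F \<in> borel_measurable borel" for F :: "'a \<times> 'a \<Rightarrow> ennreal" and c v
    by (intro measurable_compose_continuous[OF _ that] continuous_intros)
  have "(\<integral>\<^sup>+z. G z * g (fst z - h *\<^sub>R snd z, snd z) \<partial>lborel)
      = (\<integral>\<^sup>+v. \<integral>\<^sup>+x. G (x, v) * g (x - h *\<^sub>R v, v) \<partial>lborel \<partial>lborel)"
    using shifted G by (simp add: nn_integral_lborel_pair)
  also have "\<dots> = (\<integral>\<^sup>+v. \<integral>\<^sup>+x. G (x + h *\<^sub>R v, v) * g (x, v) \<partial>lborel \<partial>lborel)"
  proof (rule nn_integral_cong)
    fix v
    have "(\<lambda>x. G (x + 0, v) * g (x + - h *\<^sub>R v, v)) \<in> borel_measurable borel"
      using slice[OF G] slice[OF g] by measurable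
    then show "(\<integral>\<^sup>+x. G (x, v) * g (x - h *\<^sub>R v, v) \<partial>lborel)
        = (\<integral>\<^sup>+x. G (x + h *\<^sub>R v, v) * g (x, v) \<partial>lborel)"
      using nn_integral_lborel_translate[of "\<lambda>x. G (x, v) * g (x - h *\<^sub>R v, v)" "h *\<^sub>R v"]
      by (simp add: add.commute)
  qed
  also have "\<dots> = (\<integral>\<^sup>+z. G (fst z + h *\<^sub>R snd z, snd z) * g z \<partial>lborel)"
    using shifted g by (simp add: nn_integral_lborel_pair)
  finally show ?thesis .
qed

lemma measurable_lborel_pair_borel:
  fixes h :: "'a::euclidean_space \<times> 'b::euclidean_space \<Rightarrow> 'c::topological_space"
  assumes "h \<in> borel_measurable borel"
  shows "h \<in> borel_measurable (lborel \<Otimes>\<^sub>M lborel)"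
proof -
  have sets_eq: "sets ((lborel :: 'a measure) \<Otimes>\<^sub>M (lborel :: 'b measure)) = sets borel"
    by (simp add: borel_prod[symmetric] sets_pair_measure_cong[OF sets_lborel sets_lborel])
  show ?thesis using assms measurable_cong_sets[OF sets_eq refl, of "borel :: 'c measure"] by simp
qed

lemma nn_integral_velocity_convolution:
  fixes k :: "'a::euclidean_space \<Rightarrow> real" and f :: "'a \<times> 'a \<Rightarrow> real" and G :: "'a \<times> 'a \<Rightarrow> ennreal"
  assumes k[measurable]: "k \<in> borel_measurable borel" and f[measurable]: "f \<in> borel_measurable borel"
    and G[measurable]: "G \<in> borel_measurable borel"
    and k_nonneg: "\<And>w. 0 \<le> k w" and f_nonneg: "\<And>z. 0 \<le> f z"
  shows "(\<integral>\<^sup>+z. G z * (\<integral>\<^sup>+w. ennreal (k w * f (fst z, snd z - w)) \<partial>lborel) \<partial>lborel)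
    = (\<integral>\<^sup>+z. ennreal (f z) * (\<integral>\<^sup>+w. ennreal (k w) * G (fst z, snd z + w) \<partial>lborel) \<partial>lborel)"
proof -
  have sf: "pair_sigma_finite (lborel :: ('a \<times> 'a) measure) (lborel :: 'a measure)"
    by (simp add: pair_sigma_finite_def lborel.sigma_finite_measure_axioms)
  define F1 where "F1 z w = G z * ennreal (k w * f (fst z, snd z - w))" for z w
  define F2 where "F2 z w = G (fst z, snd z + w) * ennreal (k w * f z)" for z w
  have [measurable]: "(\<lambda>x::('a \<times> 'a) \<times> 'a. f (fst (fst x), snd (fst x) - snd x)) \<in> borel_measurable borel"
      "(\<lambda>x::('a \<times> 'a) \<times> 'a. G (fst (fst x), snd (fst x) + snd x)) \<in> borel_measurable borel"
      "(\<lambda>x::('a \<times> 'a) \<times> 'a. G (fst x)) \<in> borel_measurable borel"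
      "(\<lambda>x::('a \<times> 'a) \<times> 'a. f (fst x)) \<in> borel_measurable borel"
      "(\<lambda>x::('a \<times> 'a) \<times> 'a. k (snd x)) \<in> borel_measurable borel"
    by (rule measurable_compose_continuous[OF _ f] measurable_compose_continuous[OF _ G]
        measurable_compose_continuous[OF _ k]; intro continuous_intros)+
  have "(\<lambda>x. F1 (fst x) (snd x)) \<in> borel_measurable borel" "(\<lambda>x. F2 (fst x) (snd x)) \<in> borel_measurable borel"
    unfolding F1_def F2_def by measurable
  then have F_measurable: "(\<lambda>(z, w). F1 z w) \<in> borel_measurable (lborel \<Otimes>\<^sub>M lborel)"
      "(\<lambda>(z, w). F2 z w) \<in> borel_measurable (lborel \<Otimes>\<^sub>M lborel)"
    by (auto dest: measurable_lborel_pair_borel simp: case_prod_beta')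
  have "(\<integral>\<^sup>+z. G z * (\<integral>\<^sup>+w. ennreal (k w * f (fst z, snd z - w)) \<partial>lborel) \<partial>lborel)
      = (\<integral>\<^sup>+z. \<integral>\<^sup>+w. F1 z w \<partial>lborel \<partial>lborel)"
    unfolding F1_def by (intro nn_integral_cong nn_integral_cmult[symmetric]) measurable
  also have "\<dots> = (\<integral>\<^sup>+w. \<integral>\<^sup>+z. F1 z w \<partial>lborel \<partial>lborel)"
    by (rule pair_sigma_finite.Fubini'[OF sf F_measurable(1), symmetric])
  also have "\<dots> = (\<integral>\<^sup>+w. \<integral>\<^sup>+z. F2 z w \<partial>lborel \<partial>lborel)"
  proof (rule nn_integral_cong)
    fix w :: 'a
    have "(\<lambda>z::'a \<times> 'a. f (fst z, snd z - w)) \<in> borel_measurable borel"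
      by (rule measurable_compose_continuous[OF _ f]) (intro continuous_intros)
    then have "(\<lambda>z. F1 z w) \<in> borel_measurable borel" unfolding F1_def by measurable
    moreover have "(0, w) + z = (fst z, snd z + w)" for z :: "'a \<times> 'a"
      by (simp add: prod_eq_iff add.commute)
    ultimately show "(\<integral>\<^sup>+z. F1 z w \<partial>lborel) = (\<integral>\<^sup>+z. F2 z w \<partial>lborel)"
      using nn_integral_lborel_translate[of "\<lambda>z. F1 z w" "(0, w)"] by (simp add: F1_def F2_def)
  qed
  also have "\<dots> = (\<integral>\<^sup>+z. \<integral>\<^sup>+w. F2 z w \<partial>lborel \<partial>lborel)"
    by (rule pair_sigma_finite.Fubini'[OF sf F_measurable(2)])
  also have "\<dots> = (\<integral>\<^sup>+z. ennreal (f z) * (\<integral>\<^sup>+w. ennreal (k w) * G (fst z, snd z + w) \<partial>lborel) \<partial>lborel)"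
    using k_nonneg f_nonneg
    by (intro nn_integral_cong) (simp add: F2_def ennreal_mult nn_integral_cmult[symmetric] mult_ac)
  finally show ?thesis .
qed

lemma trunc_conv_eq:
  "trunc_conv phi R f z
    = (\<integral>w. indicator (cball 0 R) w * phi w * f (fst z, snd z - w) \<partial>lborel) / trunc_mass phi R"
  by (cases z) (simp add: trunc_conv_def trunc_mass_def)

lemma trunc_conv_nonneg:
  assumes "\<And>w. 0 \<le> phi w" "\<And>z. 0 \<le> f z"
  shows "0 \<le> trunc_conv phi R f z"
  unfolding trunc_conv_eq trunc_mass_def using assms
  by (intro divide_nonneg_nonneg integral_nonneg) auto

lemma velocity_convolution_integrand_measurable:
  fixes k :: "'a::euclidean_space \<Rightarrow> real" and f :: "'a \<times> 'a \<Rightarrow> real"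
  assumes k: "k \<in> borel_measurable borel" and f: "f \<in> borel_measurable borel"
  shows "(\<lambda>(z, w). k w * f (fst z, snd z - w)) \<in> borel_measurable (lborel \<Otimes>\<^sub>M lborel)"
proof -
  have "(\<lambda>x::('a \<times> 'a) \<times> 'a. f (fst (fst x), snd (fst x) - snd x)) \<in> borel_measurable borel"
    "(\<lambda>x::('a \<times> 'a) \<times> 'a. k (snd x)) \<in> borel_measurable borel"
    by (rule measurable_compose_continuous[OF _ f] measurable_compose_continuous[OF _ k];
        intro continuous_intros)+
  then show ?thesis by (intro measurable_lborel_pair_borel) (simp add: case_prod_beta')
qed

lemma trunc_conv_measurable:
  fixes phi :: "'a::euclidean_space \<Rightarrow> real"
  assumes [measurable]: "phi \<in> borel_measurable borel" "f \<in> borel_measurable borel"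
  shows "trunc_conv phi R f \<in> borel_measurable borel"
proof -
  have "(\<lambda>z. \<integral>w. indicator (cball 0 R) w * phi w * f (fst z, snd z - w) \<partial>lborel) \<in> borel_measurable lborel"
    using lborel.borel_measurable_lebesgue_integral[OF velocity_convolution_integrand_measurable[of
          "\<lambda>w. indicator (cball 0 R) w * phi w" f]] by simp
  then show ?thesis unfolding trunc_conv_eq[abs_def] by simp
qed

lemma trunc_conv_nn_integral:
  fixes phi :: "'a::euclidean_space \<Rightarrow> real" and f :: "'a \<times> 'a \<Rightarrow> real"
  assumes phi[measurable]: "phi \<in> borel_measurable borel" "\<And>w. 0 \<le> phi w" "integrable lborel phi"
    and Z: "0 < trunc_mass phi R"
    and f[measurable]: "f \<in> borel_measurable borel" "\<And>z. 0 \<le> f z"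
    and f_finite: "(\<integral>\<^sup>+z. ennreal (f z) \<partial>lborel) < \<infinity>"
    and G[measurable]: "G \<in> borel_measurable borel"
  shows "(\<integral>\<^sup>+z. G z * ennreal (trunc_conv phi R f z) \<partial>lborel)
    = ennreal (1 / trunc_mass phi R) * (\<integral>\<^sup>+z. ennreal (f z)
        * (\<integral>\<^sup>+w. ennreal (indicator (cball 0 R) w * phi w) * G (fst z, snd z + w) \<partial>lborel) \<partial>lborel)"
proof -
  define k where "k w = indicator (cball 0 R) w * phi w" for w :: 'a
  have k[measurable]: "k \<in> borel_measurable borel" and k_nonneg: "\<And>w. 0 \<le> k w"
    unfolding k_def using phi(2) by auto
  define F where "F z = (\<integral>\<^sup>+w. ennreal (k w * f (fst z, snd z - w)) \<partial>lborel)" for z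
  note K = velocity_convolution_integrand_measurable[OF k f(1)]
  have F[measurable]: "F \<in> borel_measurable lborel"
    unfolding F_def by (rule lborel.borel_measurable_nn_integral) (use K in measurable)
  have convolution: "(\<integral>\<^sup>+z. H z * F z \<partial>lborel)
      = (\<integral>\<^sup>+z. ennreal (f z) * (\<integral>\<^sup>+w. ennreal (k w) * H (fst z, snd z + w) \<partial>lborel) \<partial>lborel)"
    if "H \<in> borel_measurable borel" for H
    unfolding F_def by (rule nn_integral_velocity_convolution[OF k f(1) that k_nonneg f(2)])
  have "(\<integral>\<^sup>+z. F z \<partial>lborel) = (\<integral>\<^sup>+z. ennreal (f z) \<partial>lborel) * ennreal (trunc_mass phi R)"
    using convolution[of "\<lambda>_. 1"] nn_integral_trunc_kernel[OF phi(2,3), of R]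
    by (simp add: k_def nn_integral_multc)
  then have "AE z in lborel. F z \<noteq> \<infinity>"
    using f_finite by (intro nn_integral_PInf_AE[OF F]) (simp add: ennreal_mult_eq_top_iff)
  then have "AE z in lborel. ennreal (trunc_conv phi R f z) = ennreal (1 / trunc_mass phi R) * F z"
  proof (rule eventually_mono)
    fix z assume "F z \<noteq> \<infinity>"
    then have "integrable lborel (\<lambda>w. k w * f (fst z, snd z - w))"
      using K k_nonneg f(2)
      by (intro integrableI_nonneg) (auto simp: F_def top.not_eq_extremum measurable_Pair2')
    then have "ennreal (\<integral>w. k w * f (fst z, snd z - w) \<partial>lborel) = F z"
      unfolding F_def using k_nonneg f(2) by (intro nn_integral_eq_integral[symmetric]) auto
    then show "ennreal (trunc_conv phi R f z) = ennreal (1 / trunc_mass phi R) * F z"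
      using Z k_nonneg f(2)
      by (simp add: trunc_conv_eq k_def divide_inverse ennreal_mult integral_nonneg mult.commute)
  qed
  then have "(\<integral>\<^sup>+z. G z * ennreal (trunc_conv phi R f z) \<partial>lborel)
      = (\<integral>\<^sup>+z. ennreal (1 / trunc_mass phi R) * (G z * F z) \<partial>lborel)"
    by (intro nn_integral_cong_AE) (auto elim!: eventually_mono simp: mult_ac)
  also have "\<dots> = ennreal (1 / trunc_mass phi R) * (\<integral>\<^sup>+z. G z * F z \<partial>lborel)"
    by (rule nn_integral_cmult) measurable
  finally show ?thesis using convolution[OF G] by (simp add: k_def)
qed

lemma norm_add_squared_le: "(norm (a + b :: 'a::real_normed_vector))\<^sup>2 \<le> 2 * (norm a)\<^sup>2 + 2 * (norm b)\<^sup>2"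
proof -
  have "(norm (a + b))\<^sup>2 \<le> (norm a + norm b)\<^sup>2" by (intro power_mono norm_triangle_ineq) simp
  also have "\<dots> \<le> 2 * (norm a)\<^sup>2 + 2 * (norm b)\<^sup>2"
    using sum_squares_bound[of "norm a" "norm b"] by (simp add: power2_sum)
  finally show ?thesis .
qed

lemma nn_integral_trunc_kernel_shifted_norm_le:
  fixes phi :: "'a::euclidean_space \<Rightarrow> real"
  assumes "\<And>w. 0 \<le> phi w" "integrable lborel phi"
  shows "(\<integral>\<^sup>+w. ennreal (indicator (cball 0 R) w * phi w) * ennreal ((norm (fst z, snd z + w))\<^sup>2) \<partial>lborel)
    \<le> ennreal (trunc_mass phi R) * ennreal (2 * (norm z)\<^sup>2 + 2 * R\<^sup>2)"
proof -
  have "(norm (fst z, snd z + w))\<^sup>2 \<le> 2 * (norm z)\<^sup>2 + 2 * R\<^sup>2" if "w \<in> cball 0 R" for w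
  proof -
    have "(norm w)\<^sup>2 \<le> R\<^sup>2" using that by (intro power_mono) auto
    then show ?thesis
      using norm_add_squared_le[of "snd z" w] norm_Pair[of "fst z" "snd z"]
      by (simp add: norm_Pair) (smt (verit) zero_le_power2)
  qed
  then have "(\<integral>\<^sup>+w. ennreal (indicator (cball 0 R) w * phi w) * ennreal ((norm (fst z, snd z + w))\<^sup>2) \<partial>lborel)
      \<le> (\<integral>\<^sup>+w. ennreal (indicator (cball 0 R) w * phi w) * ennreal (2 * (norm z)\<^sup>2 + 2 * R\<^sup>2) \<partial>lborel)"
    by (intro nn_integral_mono) (auto simp: indicator_def simp del: ennreal_plus intro!: mult_left_mono ennreal_leI)
  also have "\<dots> = ennreal (trunc_mass phi R) * ennreal (2 * (norm z)\<^sup>2 + 2 * R\<^sup>2)"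
    using assms borel_measurable_integrable[OF assms(2)]
    by (simp add: nn_integral_multc nn_integral_trunc_kernel)
  finally show ?thesis .
qed

lemma trunc_conv_P2a:
  fixes phi :: "'a::euclidean_space \<Rightarrow> real"
  assumes phi: "phi \<in> borel_measurable borel" "\<And>w. 0 \<le> phi w" "integrable lborel phi"
    and Z: "0 < trunc_mass phi R" and f: "f \<in> P2a"
  shows "trunc_conv phi R f \<in> P2a"
proof -
  note f_D = P2a_D[OF f]
  note [measurable] = f_D(1)
  have "(\<integral>\<^sup>+z. ennreal (f z) \<partial>lborel) < \<infinity>" using f_D(3) by simp
  note conv = trunc_conv_nn_integral[OF phi Z f_D(1,2) this]
  have Z_cancel: "ennreal (1 / trunc_mass phi R) * (ennreal (trunc_mass phi R) * c) = c" for c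
    using Z by (simp add: mult.assoc[symmetric] ennreal_mult[symmetric])
  have conv_nonneg: "0 \<le> trunc_conv phi R f z" for z
    by (rule trunc_conv_nonneg) (use phi(2) f_D(2) in auto)
  have "(\<integral>\<^sup>+z. 1 * ennreal (trunc_conv phi R f z) \<partial>lborel)
      = ennreal (1 / trunc_mass phi R) * (\<integral>\<^sup>+z. ennreal (trunc_mass phi R) * ennreal (f z) \<partial>lborel)"
    using conv[of "\<lambda>_. 1"] nn_integral_trunc_kernel[OF phi(2,3), of R] by (simp add: mult.commute)
  then have mass: "(\<integral>\<^sup>+z. ennreal (trunc_conv phi R f z) \<partial>lborel) = 1"
    using f_D(3) Z_cancel[of 1] by (simp add: nn_integral_cmult)
  have "(\<integral>\<^sup>+z. ennreal ((norm z)\<^sup>2 * trunc_conv phi R f z) \<partial>lborel)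
      = ennreal (1 / trunc_mass phi R) * (\<integral>\<^sup>+z. ennreal (f z) * (\<integral>\<^sup>+w. ennreal (indicator (cball 0 R) w * phi w)
          * ennreal ((norm (fst z, snd z + w))\<^sup>2) \<partial>lborel) \<partial>lborel)"
    using conv[of "\<lambda>z. ennreal ((norm z)\<^sup>2)"] conv_nonneg by (simp add: ennreal_mult)
  also have "\<dots> \<le> ennreal (1 / trunc_mass phi R)
      * (\<integral>\<^sup>+z. ennreal (trunc_mass phi R) * ennreal (f z * (2 * (norm z)\<^sup>2 + 2 * R\<^sup>2)) \<partial>lborel)"
    using nn_integral_trunc_kernel_shifted_norm_le[OF phi(2,3)] f_D(2)
    by (intro mult_left_mono nn_integral_mono) (auto simp: ennreal_mult mult_ac intro!: mult_left_mono)
  also have "\<dots> = ennreal (1 / trunc_mass phi R)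
      * (ennreal (trunc_mass phi R) * (\<integral>\<^sup>+z. ennreal (f z * (2 * (norm z)\<^sup>2 + 2 * R\<^sup>2)) \<partial>lborel))"
    by (rule arg_cong[where f = "(*) _"], rule nn_integral_cmult) measurable
  also have "\<dots> = (\<integral>\<^sup>+z. ennreal (2 * ((norm z)\<^sup>2 * f z) + 2 * R\<^sup>2 * f z) \<partial>lborel)"
    by (simp only: Z_cancel) (simp add: algebra_simps)
  also have "\<dots> < \<infinity>"
  proof -
    have "integrable lborel (\<lambda>z. 2 * ((norm z)\<^sup>2 * f z) + 2 * R\<^sup>2 * f z)"
      using f unfolding P2a_def by auto
    then show ?thesis using f_D(2) by (subst nn_integral_eq_integral) auto
  qed
  finally show ?thesis
    unfolding P2a_iff_nn_integral using trunc_conv_measurable[OF phi(1) f_D(1)] mass conv_nonneg by blast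
qed

definition free_transport :: "real \<Rightarrow> ('a::euclidean_space \<times> 'a \<Rightarrow> real) \<Rightarrow> 'a \<times> 'a \<Rightarrow> real" where
  "free_transport h f z = f (fst z - h *\<^sub>R snd z, snd z)"

lemma free_transport_measurable:
  "f \<in> borel_measurable borel \<Longrightarrow> free_transport h f \<in> borel_measurable borel"
  unfolding free_transport_def[abs_def]
  by (rule measurable_compose_continuous) (intro continuous_intros)

lemma nn_integral_free_transport:
  fixes f :: "'a::euclidean_space \<times> 'a \<Rightarrow> real"
  assumes [measurable]: "f \<in> borel_measurable borel" "G \<in> borel_measurable borel"
  shows "(\<integral>\<^sup>+z. G z * ennreal (free_transport h f z) \<partial>lborel)
    = (\<integral>\<^sup>+z. G (fst z + h *\<^sub>R snd z, snd z) * ennreal (f z) \<partial>lborel)"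
  using nn_integral_shear[of G "\<lambda>z. ennreal (f z)" h] by (simp add: free_transport_def)

lemma free_transport_P2a:
  assumes f: "f \<in> P2a"
  shows "free_transport h f \<in> P2a"
proof -
  note f_D = P2a_D[OF f]
  note [measurable] = f_D(1)
  have nonneg: "0 \<le> free_transport h f z" for z by (simp add: free_transport_def f_D(2))
  have mass: "(\<integral>\<^sup>+z. ennreal (free_transport h f z) \<partial>lborel) = 1"
    using nn_integral_free_transport[of f "\<lambda>_. 1" h] f_D(3) by simp
  have sheared_norm: "(norm (fst z + h *\<^sub>R snd z, snd z))\<^sup>2 \<le> (2 + 2 * h\<^sup>2) * (norm z)\<^sup>2" for z
  proof -
    have "(norm (fst z + h *\<^sub>R snd z, snd z))\<^sup>2 \<le> 2 * (norm (fst z))\<^sup>2 + 2 * (norm (h *\<^sub>R snd z))\<^sup>2 + (norm (snd z))\<^sup>2"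
      using norm_add_squared_le[of "fst z" "h *\<^sub>R snd z"] by (simp add: norm_Pair)
    also have "\<dots> \<le> (2 + 2 * h\<^sup>2) * ((norm (fst z))\<^sup>2 + (norm (snd z))\<^sup>2)"
      by (simp add: power_mult_distrib algebra_simps)
    also have "\<dots> = (2 + 2 * h\<^sup>2) * (norm z)\<^sup>2" by (cases z) (simp add: norm_Pair)
    finally show ?thesis .
  qed
  have "(\<integral>\<^sup>+z. ennreal ((norm z)\<^sup>2 * free_transport h f z) \<partial>lborel)
      = (\<integral>\<^sup>+z. ennreal ((norm (fst z + h *\<^sub>R snd z, snd z))\<^sup>2) * ennreal (f z) \<partial>lborel)"
    using nn_integral_free_transport[of f "\<lambda>z. ennreal ((norm z)\<^sup>2)" h] nonneg
    by (simp add: ennreal_mult)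
  also have "\<dots> \<le> (\<integral>\<^sup>+z. ennreal (2 + 2 * h\<^sup>2) * ennreal ((norm z)\<^sup>2 * f z) \<partial>lborel)"
  proof (rule nn_integral_mono)
    fix z :: "'a \<times> 'a"
    have "(norm (fst z + h *\<^sub>R snd z, snd z))\<^sup>2 * f z \<le> (2 + 2 * h\<^sup>2) * ((norm z)\<^sup>2 * f z)"
      using mult_right_mono[OF sheared_norm f_D(2)] by (simp add: mult.assoc)
    then have "ennreal ((norm (fst z + h *\<^sub>R snd z, snd z))\<^sup>2 * f z)
        \<le> ennreal ((2 + 2 * h\<^sup>2) * ((norm z)\<^sup>2 * f z))" by (rule ennreal_leI)
    then show "ennreal ((norm (fst z + h *\<^sub>R snd z, snd z))\<^sup>2) * ennreal (f z)
        \<le> ennreal (2 + 2 * h\<^sup>2) * ennreal ((norm z)\<^sup>2 * f z)"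
      using f_D(2)[of z] by (simp only: ennreal_mult zero_le_power2 add_nonneg_nonneg zero_le_numeral
          mult_nonneg_nonneg)
  qed
  also have "\<dots> = ennreal (2 + 2 * h\<^sup>2) * (\<integral>\<^sup>+z. ennreal ((norm z)\<^sup>2 * f z) \<partial>lborel)"
    by (rule nn_integral_cmult) measurable
  also have "\<dots> < \<infinity>" using f_D(4) by (simp add: ennreal_mult_less_top)
  finally show ?thesis
    unfolding P2a_iff_nn_integral using free_transport_measurable[OF f_D(1)] nonneg mass by blast
qed

lemma distr_density_lborel_eqI:
  fixes S :: "'a::euclidean_space \<Rightarrow> 'a" and f g :: "'a \<Rightarrow> ennreal"
  assumes [measurable]: "S \<in> borel_measurable borel" "f \<in> borel_measurable borel" "g \<in> borel_measurable borel"
    and eq: "\<And>A. A \<in> sets borel \<Longrightarrow> (\<integral>\<^sup>+z. indicator A z * g z \<partial>lborel) = (\<integral>\<^sup>+z. indicator A (S z) * f z \<partial>lborel)"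
  shows "distr (density lborel f) borel S = density lborel g"
proof (rule measure_eqI)
  fix A assume "A \<in> sets (distr (density lborel f) borel S)"
  then have [measurable]: "A \<in> sets borel" by simp
  then have "S -` A \<in> sets borel" by (rule measurable_sets_borel[rotated]) simp
  then have "emeasure (distr (density lborel f) borel S) A = (\<integral>\<^sup>+z. f z * indicator (S -` A) z \<partial>lborel)"
    by (simp add: emeasure_distr emeasure_density)
  also have "\<dots> = (\<integral>\<^sup>+z. indicator A z * g z \<partial>lborel)"
    using eq[of A] by (simp add: indicator_def mult.commute)
  finally show "emeasure (distr (density lborel f) borel S) A = emeasure (density lborel g) A"
    by (simp add: emeasure_density mult.commute)
qed simp

lemma Wh2_free_transport:
  fixes f :: "'a::euclidean_space \<times> 'a \<Rightarrow> real"
  assumes f: "f \<in> P2a" and h: "h \<noteq> 0"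
  shows "Wh2 h f (free_transport h f) = 0"
proof -
  note f_D = P2a_D[OF f]
  note [measurable] = f_D(1)
  define S where "S z = (fst z + h *\<^sub>R snd z, snd z)" for z :: "'a \<times> 'a"
  have S[measurable]: "S \<in> borel_measurable borel" "(\<lambda>z. (z, S z)) \<in> borel_measurable borel"
    unfolding S_def by (intro borel_measurable_continuous_onI continuous_intros)+
  define D where "D = density lborel (\<lambda>z. ennreal (f z))"
  have D: "prob_space D"
    using f_D(3) by (intro prob_spaceI) (simp add: D_def emeasure_density)
  have [measurable]: "(\<lambda>z. (z, S z)) \<in> measurable D borel" by (simp add: D_def)
  have [measurable]: "fst \<in> borel_measurable (borel :: (('a \<times> 'a) \<times> 'a \<times> 'a) measure)"
      "snd \<in> borel_measurable (borel :: (('a \<times> 'a) \<times> 'a \<times> 'a) measure)"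
    by (intro borel_measurable_continuous_onI continuous_intros)+
  define p where "p = distr D borel (\<lambda>z. (z, S z))"
  have "p \<in> couplings f (free_transport h f)"
    unfolding couplings_def mem_Collect_eq
  proof (intro conjI)
    show "sets p = sets borel" "prob_space p"
      unfolding p_def by (simp_all add: prob_space.prob_space_distr[OF D])
    have "distr p borel fst = distr D borel (\<lambda>z. z)"
      unfolding p_def by (subst distr_distr) (auto simp: comp_def)
    then show "distr p borel fst = density lborel (\<lambda>z. ennreal (f z))"
      by (simp add: D_def distr_id2)
    have "distr p borel snd = distr D borel S"
      unfolding p_def by (subst distr_distr) (auto simp: comp_def)
    also have "\<dots> = density lborel (\<lambda>z. ennreal (free_transport h f z))"
      unfolding D_def using nn_integral_free_transport[of f _ h] free_transport_measurable[OF f_D(1)]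
      by (intro distr_density_lborel_eqI) (simp_all add: S_def)
    finally show "distr p borel snd = density lborel (\<lambda>z. ennreal (free_transport h f z))" .
  qed
  moreover have "(\<integral>\<^sup>+z. ennreal (cost_h h z) \<partial>p) = 0"
  proof -
    have [measurable]: "cost_h h \<in> borel_measurable borel"
      unfolding cost_h_def case_prod_unfold by (intro borel_measurable_continuous_onI continuous_intros)
    have "cost_h h (z, S z) = 0" for z
      using h by (simp add: cost_h_def S_def case_prod_unfold scaleR_add_right[symmetric])
    then show ?thesis unfolding p_def by (simp add: nn_integral_distr)
  qed
  ultimately show ?thesis unfolding Wh2_def by (metis INF_lower le_zero_eq)
qed

section \<open>Energy estimate for one step\<close>

lemma second_order_upper_bound:
  fixes Psi :: "'a::real_inner \<Rightarrow> real" and DPsi :: "'a \<Rightarrow> 'a" and D2Psi :: "'a \<Rightarrow> 'a \<Rightarrow>\<^sub>L 'a"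
  assumes grad: "\<And>v. (Psi has_derivative (\<lambda>u. DPsi v \<bullet> u)) (at v)"
    and hess: "\<And>v. (DPsi has_derivative blinfun_apply (D2Psi v)) (at v)"
    and bound: "\<And>v. norm (D2Psi v) \<le> M"
  shows "Psi (v + w) \<le> Psi v + DPsi v \<bullet> w + M / 2 * (norm w)\<^sup>2"
proof -
  have DPsi_lipschitz: "norm (DPsi a - DPsi b) \<le> M * norm (a - b)" for a b
    using hess bound
    by (intro differentiable_bound[where S = UNIV and f' = "\<lambda>x. blinfun_apply (D2Psi x)"])
      (auto simp: norm_blinfun.rep_eq has_derivative_at_withinI)
  define g where "g t = Psi (v + t *\<^sub>R w) - t * (DPsi v \<bullet> w) - M / 2 * t\<^sup>2 * (norm w)\<^sup>2" for t
  have "g 1 \<le> g 0"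
  proof (rule DERIV_nonpos_imp_nonincreasing[of 0 1 g])
    fix t :: real assume t: "0 \<le> t" "t \<le> 1"
    have "((\<lambda>t. v + t *\<^sub>R w) has_derivative (\<lambda>h. h *\<^sub>R w)) (at t)"
      by (auto intro!: derivative_eq_intros)
    from diff_chain_at[OF this grad]
    have "((\<lambda>t. Psi (v + t *\<^sub>R w)) has_derivative (\<lambda>h. h * (DPsi (v + t *\<^sub>R w) \<bullet> w))) (at t)"
      by (simp add: o_def)
    moreover have "(\<lambda>h. h * (DPsi (v + t *\<^sub>R w) \<bullet> w)) = (*) (DPsi (v + t *\<^sub>R w) \<bullet> w)"
      by (rule ext) (simp add: mult.commute)
    ultimately have "((\<lambda>t. Psi (v + t *\<^sub>R w)) has_real_derivative DPsi (v + t *\<^sub>R w) \<bullet> w) (at t)"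
      by (simp add: has_field_derivative_def)
    then have "(g has_real_derivative (DPsi (v + t *\<^sub>R w) - DPsi v) \<bullet> w - M * t * (norm w)\<^sup>2) (at t)"
      unfolding g_def
      by (auto intro!: derivative_eq_intros simp: power2_eq_square algebra_simps inner_diff_left)
    moreover have "(DPsi (v + t *\<^sub>R w) - DPsi v) \<bullet> w \<le> M * t * (norm w)\<^sup>2"
    proof -
      have "(DPsi (v + t *\<^sub>R w) - DPsi v) \<bullet> w \<le> norm (DPsi (v + t *\<^sub>R w) - DPsi v) * norm w"
        by (rule norm_cauchy_schwarz)
      also have "\<dots> \<le> M * norm (t *\<^sub>R w) * norm w"
        using DPsi_lipschitz[of "v + t *\<^sub>R w" v] by (intro mult_right_mono) auto
      finally show ?thesis using t by (simp add: power2_eq_square mult.assoc)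
    qed
    ultimately show "\<exists>y. (g has_real_derivative y) (at t) \<and> y \<le> 0" by force
  qed simp
  then show ?thesis unfolding g_def by simp
qed

lemma velocity_potential_measurable:
  fixes Psi :: "'a::euclidean_space \<Rightarrow> real"
  assumes "\<And>v. (Psi has_derivative (\<lambda>u. DPsi v \<bullet> u)) (at v)"
  shows "(\<lambda>z::'a \<times> 'a. Psi (snd z)) \<in> borel_measurable borel"
proof -
  have "continuous_on UNIV Psi"
    using has_derivative_continuous[OF assms] by (simp add: continuous_at_imp_continuous_on)
  then show ?thesis by (intro borel_measurable_continuous_onI continuous_on_compose2[OF _ continuous_on_snd]) auto
qed

lemma trunc_kernel_taylor_average:
  fixes phi :: "'a::euclidean_space \<Rightarrow> real" and Psi :: "'a \<Rightarrow> real"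
  assumes fhk: "frac_heat_kernel s t phi" and R: "0 < R"
    and Psi_nonneg: "\<And>v. 0 \<le> Psi v"
    and grad: "\<And>v. (Psi has_derivative (\<lambda>u. DPsi v \<bullet> u)) (at v)"
    and hess: "\<And>v. (DPsi has_derivative blinfun_apply (D2Psi v)) (at v)"
    and bound: "\<And>v. norm (D2Psi v) \<le> M"
  shows "(\<integral>\<^sup>+w. ennreal (indicator (cball 0 R) w * phi w) * ennreal (Psi (v + w)) \<partial>lborel)
    \<le> ennreal (trunc_mass phi R * Psi v
        + M / 2 * (\<integral>w. indicator (cball 0 R) w * phi w * (norm w)\<^sup>2 \<partial>lborel))"
proof -
  note phi = frac_heat_kernel_D[OF fhk]
  define k where "k w = indicator (cball 0 R) w * phi w" for w :: 'a
  have k_nonneg: "0 \<le> k w" for w using phi(2) by (simp add: k_def)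
  define T where "T w = Psi v + DPsi v \<bullet> w + M / 2 * (norm w)\<^sup>2" for w
  have taylor: "Psi (v + w) \<le> T w" for w
    unfolding T_def by (rule second_order_upper_bound[OF grad hess bound])
  have k_int: "integrable lborel k"
    unfolding k_def using integrable_mult_indicator[of "cball 0 R" lborel phi] phi(3) by simp
  have first_int: "integrable lborel (\<lambda>w. k w * (DPsi v \<bullet> w))"
  proof -
    have "\<bar>DPsi v \<bullet> w\<bar> \<le> norm (DPsi v) * R" if "norm w \<le> R" for w
      using Cauchy_Schwarz_ineq2[of "DPsi v" w] mult_left_mono[OF that, of "norm (DPsi v)"] by simp
    then have "integrable lborel (\<lambda>w. phi w * (indicator (cball 0 R) w * (DPsi v \<bullet> w)))"
      using phi(3) R by (intro integrable_mult_bounded[where B = "norm (DPsi v) * R"])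
        (auto simp: indicator_def)
    then show ?thesis by (simp add: k_def mult_ac)
  qed
  have second_int: "integrable lborel (\<lambda>w. k w * (norm w)\<^sup>2)"
    using integrable_ball_second_moment[OF phi(3)] by (simp add: k_def)
  have kT_int: "integrable lborel (\<lambda>w. k w * T w)"
    using k_int first_int second_int by (simp add: T_def algebra_simps)
  have "(\<integral>\<^sup>+w. ennreal (k w) * ennreal (Psi (v + w)) \<partial>lborel) \<le> (\<integral>\<^sup>+w. ennreal (k w * T w) \<partial>lborel)"
    using k_nonneg Psi_nonneg taylor
    by (intro nn_integral_mono) (simp add: ennreal_mult[symmetric] mult_left_mono ennreal_leI)
  also have "\<dots> = ennreal (\<integral>w. k w * T w \<partial>lborel)"
    using k_nonneg Psi_nonneg taylor
    by (intro nn_integral_eq_integral kT_int AE_I2) (meson mult_nonneg_nonneg order_trans)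
  also have "(\<integral>w. k w * T w \<partial>lborel)
      = Psi v * (\<integral>w. k w \<partial>lborel) + (\<integral>w. k w * (DPsi v \<bullet> w) \<partial>lborel)
        + M / 2 * (\<integral>w. k w * (norm w)\<^sup>2 \<partial>lborel)"
    using k_int first_int second_int by (simp add: T_def algebra_simps)
  also have "(\<integral>w. k w * (DPsi v \<bullet> w) \<partial>lborel) = 0"
    unfolding k_def by (rule frac_heat_kernel_ball_first_moment[OF fhk R])
  finally show ?thesis by (simp add: k_def trunc_mass_def mult.commute)
qed

lemma ennreal_inverse_mult_affine:
  fixes Z x p c :: real
  assumes "0 < Z" "0 \<le> x" "0 \<le> p" "0 \<le> c"
  shows "ennreal (1 / Z) * (ennreal x * ennreal (Z * p + c)) = ennreal p * ennreal x + ennreal (c / Z) * ennreal x"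
proof -
  have "1 / Z * (x * (Z * p + c)) = p * x + c / Z * x" using assms(1) by (simp add: field_simps)
  then show ?thesis using assms by (simp add: ennreal_mult[symmetric] ennreal_plus[symmetric] del: ennreal_plus)
qed

lemma nn_integral_Psi_trunc_conv_le:
  fixes phi :: "'a::euclidean_space \<Rightarrow> real" and Psi :: "'a \<Rightarrow> real"
  assumes fhk: "frac_heat_kernel s t phi" and R: "0 < R" and Z: "0 < trunc_mass phi R"
    and f: "f \<in> P2a"
    and Psi_nonneg: "\<And>v. 0 \<le> Psi v"
    and grad: "\<And>v. (Psi has_derivative (\<lambda>u. DPsi v \<bullet> u)) (at v)"
    and hess: "\<And>v. (DPsi has_derivative blinfun_apply (D2Psi v)) (at v)"
    and bound: "\<And>v. norm (D2Psi v) \<le> M"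
  shows "(\<integral>\<^sup>+z. ennreal (Psi (snd z)) * ennreal (trunc_conv phi R f z) \<partial>lborel)
    \<le> (\<integral>\<^sup>+z. ennreal (Psi (snd z)) * ennreal (f z) \<partial>lborel) + ennreal (M / 2 * trunc_second_moment phi R)"
proof -
  note phi = frac_heat_kernel_D[OF fhk]
  note f_D = P2a_D[OF f]
  note [measurable] = f_D(1)
  define M2 where "M2 = (\<integral>w. indicator (cball 0 R) w * phi w * (norm w)\<^sup>2 \<partial>lborel)"
  have M: "0 \<le> M" using bound[of 0] norm_ge_zero order_trans by blast
  have M2: "0 \<le> M2" unfolding M2_def using phi(2) by (intro integral_nonneg_AE AE_I2) simp
  have [measurable]: "(\<lambda>z::'a \<times> 'a. Psi (snd z)) \<in> borel_measurable borel"
    by (rule velocity_potential_measurable[OF grad])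
  then have G: "(\<lambda>z::'a \<times> 'a. ennreal (Psi (snd z))) \<in> borel_measurable borel" by measurable
  have "(\<integral>\<^sup>+z. ennreal (f z) \<partial>lborel) < \<infinity>" using f_D(3) by simp
  note conv = trunc_conv_nn_integral[OF phi(1-3) Z f_D(1,2) this G]
  have "(\<integral>\<^sup>+z. ennreal (Psi (snd z)) * ennreal (trunc_conv phi R f z) \<partial>lborel)
      = ennreal (1 / trunc_mass phi R) * (\<integral>\<^sup>+z. ennreal (f z)
          * (\<integral>\<^sup>+w. ennreal (indicator (cball 0 R) w * phi w) * ennreal (Psi (snd z + w)) \<partial>lborel) \<partial>lborel)"
    using conv by simp
  also have "\<dots> \<le> ennreal (1 / trunc_mass phi R)
      * (\<integral>\<^sup>+z. ennreal (f z) * ennreal (trunc_mass phi R * Psi (snd z) + M / 2 * M2) \<partial>lborel)"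
    unfolding M2_def
    by (intro mult_left_mono nn_integral_mono trunc_kernel_taylor_average[OF fhk R Psi_nonneg grad hess bound])
      simp_all
  also have "\<dots> = (\<integral>\<^sup>+z. ennreal (1 / trunc_mass phi R)
      * (ennreal (f z) * ennreal (trunc_mass phi R * Psi (snd z) + M / 2 * M2)) \<partial>lborel)"
    by (rule nn_integral_cmult[symmetric]) measurable
  also have "\<dots> = (\<integral>\<^sup>+z. ennreal (Psi (snd z)) * ennreal (f z)
      + ennreal (M / 2 * trunc_second_moment phi R) * ennreal (f z) \<partial>lborel)"
    using ennreal_inverse_mult_affine[OF Z f_D(2) Psi_nonneg, of "M / 2 * M2"] M M2
    by (simp add: trunc_second_moment_def M2_def)
  also have "\<dots> = (\<integral>\<^sup>+z. ennreal (Psi (snd z)) * ennreal (f z) \<partial>lborel) + ennreal (M / 2 * trunc_second_moment phi R)"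
    using G f_D(3) by (simp add: nn_integral_add nn_integral_cmult)
  finally show ?thesis .
qed

lemma indicator_unit_box_P2a:
  fixes c :: "'a::euclidean_space \<times> 'a"
  shows "indicator (cbox c (c + One)) \<in> (P2a :: ('a \<times> 'a \<Rightarrow> real) set)"
proof -
  have box: "cbox c (c + One) \<in> sets borel" "emeasure lborel (cbox c (c + One)) = 1"
    by (simp_all add: borel_closed emeasure_lborel_cbox_eq inner_simps)
  obtain B where B: "\<And>z. z \<in> cbox c (c + One) \<Longrightarrow> norm z \<le> B"
    using bounded_cbox[of c "c + One"] unfolding bounded_iff by blast
  have "(\<integral>\<^sup>+z. ennreal ((norm z)\<^sup>2 * indicator (cbox c (c + One)) z) \<partial>lborel)
      \<le> (\<integral>\<^sup>+z. ennreal (B\<^sup>2) * indicator (cbox c (c + One)) z \<partial>lborel)"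
    using B by (intro nn_integral_mono) (auto simp: indicator_def intro!: ennreal_leI power_mono)
  also have "\<dots> < \<infinity>" using box by (simp add: nn_integral_cmult_indicator ennreal_mult_less_top)
  finally show ?thesis
    unfolding P2a_iff_nn_integral using box by (simp add: ennreal_indicator nn_integral_indicator)
qed

lemma P2a_not_AE_singleton: "\<exists>g1 \<in> P2a. \<exists>g2 \<in> P2a. \<not> (AE z in lborel. g1 z = (g2 z :: real))"
proof -
  let ?c = "(2::real) *\<^sub>R (One :: 'a::euclidean_space \<times> 'a)"
  let ?g1 = "indicator (cbox 0 (0 + One)) :: 'a \<times> 'a \<Rightarrow> real"
  let ?g2 = "indicator (cbox ?c (?c + One)) :: 'a \<times> 'a \<Rightarrow> real"
  have "?g1 \<in> P2a" "?g2 \<in> P2a" by (rule indicator_unit_box_P2a)+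
  moreover have "\<not> (AE z in lborel. ?g1 z = ?g2 z)"
  proof
    assume AE_eq: "AE z in lborel. ?g1 z = ?g2 z"
    have disjoint: "?g1 z * ?g2 z = 0" for z
    proof (cases "z \<in> cbox 0 (0 + One) \<and> z \<in> cbox ?c (?c + One)")
      case True
      obtain b :: "'a \<times> 'a" where b: "b \<in> Basis" using nonempty_Basis by blast
      then have "z \<bullet> b \<le> 1" "2 \<le> z \<bullet> b" using True by (auto simp: mem_box inner_simps)
      then show ?thesis by simp
    qed auto
    have "1 = (\<integral>\<^sup>+z. ennreal (?g1 z) \<partial>lborel)"
      using P2a_D(3)[OF indicator_unit_box_P2a[of 0]] by simp
    also have "\<dots> = (\<integral>\<^sup>+z. ennreal (?g1 z * ?g2 z) \<partial>lborel)"
      using AE_eq by (intro nn_integral_cong_AE) (auto elim!: eventually_mono simp: indicator_def)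
    finally show False by (simp only: disjoint) simp
  qed
  ultimately show ?thesis by blast
qed

text \<open>If the truncated kernel had no mass, \<open>trunc_conv\<close> would vanish identically (division by zero),
  no coupling with it would exist, and every density would minimise the JKO functional.\<close>

lemma trunc_mass_pos_if_unique_minimizer:
  fixes phi :: "'a::euclidean_space \<Rightarrow> real"
  assumes phi_nonneg: "\<And>w. 0 \<le> phi w" and h: "0 < h"
    and unique: "\<forall>g\<in>P2a. JKO_functional h Psi (trunc_conv phi R fp) g
        \<le> JKO_functional h Psi (trunc_conv phi R fp) fnew \<longrightarrow> (AE z in lborel. g z = fnew z)"
  shows "0 < trunc_mass phi R"
proof (rule ccontr)
  assume "\<not> 0 < trunc_mass phi R"
  moreover have "0 \<le> trunc_mass phi R"
    unfolding trunc_mass_def using phi_nonneg by (intro integral_nonneg_AE AE_I2) simp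
  ultimately have "trunc_conv phi R fp = (\<lambda>_. 0)" by (simp add: trunc_conv_eq fun_eq_iff)
  moreover have "couplings (\<lambda>_. 0) g = {}" for g :: "'a \<times> 'a \<Rightarrow> real"
  proof (rule ccontr)
    assume "couplings (\<lambda>_. 0) g \<noteq> {}"
    then obtain p where "p \<in> couplings (\<lambda>_. 0) g" by blast
    then have p: "prob_space p" "sets p = sets borel"
      and fst_marginal: "distr p borel fst = density lborel (\<lambda>z. ennreal 0)"
      unfolding couplings_def by auto
    have "fst \<in> measurable p (borel :: ('a \<times> 'a) measure)"
      using measurable_cong_sets[OF p(2) refl, of "borel :: ('a \<times> 'a) measure"]
      by (simp add: borel_measurable_continuous_onI continuous_on_fst continuous_on_id)
    then have "emeasure (distr p borel fst) (space (distr p borel fst)) = 1"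
      by (intro prob_space.emeasure_space_1 prob_space.prob_space_distr[OF p(1)])
    then show False by (simp add: fst_marginal emeasure_density)
  qed
  ultimately have "JKO_functional h Psi (trunc_conv phi R fp) g = \<top>" for g
    using h by (simp add: JKO_functional_def Wh2_def ennreal_mult_eq_top_iff)
  then have all_equal: "AE z in lborel. g z = fnew z" if "g \<in> P2a" for g
    using unique that by simp
  obtain g1 g2 :: "'a \<times> 'a \<Rightarrow> real" where g: "g1 \<in> P2a" "g2 \<in> P2a" "\<not> (AE z in lborel. g1 z = g2 z)"
    using P2a_not_AE_singleton by blast
  have "AE z in lborel. g1 z = g2 z"
    using all_equal[OF g(1)] all_equal[OF g(2)] by eventually_elim simp
  with g(3) show False by simp
qed

lemma JKO_step_estimate:
  fixes phi :: "'a::euclidean_space \<Rightarrow> real" and Psi :: "'a \<Rightarrow> real"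
  assumes fhk: "frac_heat_kernel s h phi" and R: "0 < R" and h: "0 < h"
    and Z: "0 < trunc_mass phi R" and fprev: "fprev \<in> P2a" and fnext: "fnext \<in> P2a"
    and minimal: "\<forall>g\<in>P2a. JKO_functional h Psi (trunc_conv phi R fprev) fnext
        \<le> JKO_functional h Psi (trunc_conv phi R fprev) g"
    and Psi_nonneg: "\<And>v. 0 \<le> Psi v"
    and grad: "\<And>v. (Psi has_derivative (\<lambda>u. DPsi v \<bullet> u)) (at v)"
    and hess: "\<And>v. (DPsi has_derivative blinfun_apply (D2Psi v)) (at v)"
    and bound: "\<And>v. norm (D2Psi v) \<le> M"
  shows "ennreal (1 / (2 * h)) * Wh2 h (trunc_conv phi R fprev) fnext
      + (\<integral>\<^sup>+z. ennreal (Psi (snd z) * fnext z) \<partial>lborel)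
    \<le> (\<integral>\<^sup>+z. ennreal (Psi (snd z) * fprev z) \<partial>lborel) + ennreal (M / 2 * trunc_second_moment phi R)"
proof -
  note phi = frac_heat_kernel_D[OF fhk]
  define fbar where "fbar = trunc_conv phi R fprev"
  have fbar: "fbar \<in> P2a" unfolding fbar_def by (rule trunc_conv_P2a[OF phi(1-3) Z fprev])
  have [measurable]: "(\<lambda>z::'a \<times> 'a. Psi (snd z)) \<in> borel_measurable borel"
    by (rule velocity_potential_measurable[OF grad])
  have energy: "(\<integral>\<^sup>+z. ennreal (Psi (snd z) * g z) \<partial>lborel)
      = (\<integral>\<^sup>+z. ennreal (Psi (snd z)) * ennreal (g z) \<partial>lborel)" if "g \<in> P2a" for g
    using P2a_D(2)[OF that] Psi_nonneg by (intro nn_integral_cong) (simp add: ennreal_mult)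
  text \<open>Compare with the free transport of \<open>fbar\<close>: it costs nothing and keeps the potential energy.\<close>
  have "ennreal (1 / (2 * h)) * Wh2 h fbar fnext + (\<integral>\<^sup>+z. ennreal (Psi (snd z) * fnext z) \<partial>lborel)
      \<le> JKO_functional h Psi fbar (free_transport h fbar)"
    using minimal free_transport_P2a[OF fbar] by (simp add: JKO_functional_def fbar_def)
  also have "\<dots> = (\<integral>\<^sup>+z. ennreal (Psi (snd z)) * ennreal (free_transport h fbar z) \<partial>lborel)"
    using Wh2_free_transport[OF fbar] h energy[OF free_transport_P2a[OF fbar]]
    by (simp add: JKO_functional_def)
  also have "\<dots> = (\<integral>\<^sup>+z. ennreal (Psi (snd z)) * ennreal (fbar z) \<partial>lborel)"
    using nn_integral_free_transport[of fbar "\<lambda>z. ennreal (Psi (snd z))" h] P2a_D(1)[OF fbar] by simp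
  also have "\<dots> \<le> (\<integral>\<^sup>+z. ennreal (Psi (snd z)) * ennreal (fprev z) \<partial>lborel)
      + ennreal (M / 2 * trunc_second_moment phi R)"
    unfolding fbar_def by (rule nn_integral_Psi_trunc_conv_le[OF fhk R Z fprev Psi_nonneg grad hess bound])
  finally show ?thesis unfolding fbar_def energy[OF fprev] .
qed

lemma telescoping_sum_le:
  fixes a I :: "nat \<Rightarrow> 'a::{ordered_comm_semiring, semiring_1}"
  assumes "\<And>n. n \<in> {1..N} \<Longrightarrow> a n + I n \<le> I (n - 1) + c"
  shows "(\<Sum>n=1..N. a n) + I N \<le> I 0 + of_nat N * c"
  using assms
proof (induction N)
  case (Suc N)
  have "(\<Sum>n=1..Suc N. a n) + I (Suc N) = (\<Sum>n=1..N. a n) + (a (Suc N) + I (Suc N))"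
    by (simp add: add.assoc)
  also have "\<dots> \<le> (\<Sum>n=1..N. a n) + (I N + c)"
    using Suc.prems[of "Suc N"] by (intro add_left_mono) simp
  also have "\<dots> \<le> I 0 + of_nat N * c + c"
    using Suc by (simp add: add.assoc[symmetric] add_right_mono)
  finally show ?case by (simp add: algebra_simps)
qed simp

lemma JKO_scheme_dissipation:
  fixes phi :: "'a::euclidean_space \<Rightarrow> real" and Psi :: "'a \<Rightarrow> real"
  assumes fhk: "frac_heat_kernel s h phi" and R: "0 < R" and h: "0 < h" and f0: "f 0 \<in> P2a"
    and steps: "\<forall>n\<in>{1..N}. fbar n = trunc_conv phi R (f (n - 1))
        \<and> f n \<in> P2a
        \<and> (\<forall>g\<in>P2a. JKO_functional h Psi (fbar n) (f n) \<le> JKO_functional h Psi (fbar n) g)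
        \<and> (\<forall>g\<in>P2a. JKO_functional h Psi (fbar n) g \<le> JKO_functional h Psi (fbar n) (f n)
              \<longrightarrow> (AE z in lborel. g z = f n z))"
    and Psi_nonneg: "\<And>v. 0 \<le> Psi v"
    and grad: "\<And>v. (Psi has_derivative (\<lambda>u. DPsi v \<bullet> u)) (at v)"
    and hess: "\<And>v. (DPsi has_derivative blinfun_apply (D2Psi v)) (at v)"
    and bound: "\<And>v. norm (D2Psi v) \<le> M"
  shows "ennreal (1 / (2 * h)) * (\<Sum>n=1..N. Wh2 h (fbar n) (f n))
    \<le> (\<integral>\<^sup>+z. ennreal (Psi (snd z) * f 0 z) \<partial>lborel) + of_nat N * ennreal (M / 2 * trunc_second_moment phi R)"
proof -
  define I where "I n = (\<integral>\<^sup>+z. ennreal (Psi (snd z) * f n z) \<partial>lborel)" for n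
  have step: "ennreal (1 / (2 * h)) * Wh2 h (fbar n) (f n) + I n
      \<le> I (n - 1) + ennreal (M / 2 * trunc_second_moment phi R)" if n: "n \<in> {1..N}" for n
  proof -
    have fbar_n: "fbar n = trunc_conv phi R (f (n - 1))" and fn: "f n \<in> P2a"
      and minimal: "\<forall>g\<in>P2a. JKO_functional h Psi (fbar n) (f n) \<le> JKO_functional h Psi (fbar n) g"
      and unique: "\<forall>g\<in>P2a. JKO_functional h Psi (fbar n) g \<le> JKO_functional h Psi (fbar n) (f n)
          \<longrightarrow> (AE z in lborel. g z = f n z)"
      using bspec[OF steps n] by blast+
    have "f (n - 1) \<in> P2a"
    proof (cases "n = 1")
      case False
      then have "n - 1 \<in> {1..N}" using n by auto
      then show ?thesis using steps by blast
    qed (use f0 in simp)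
    moreover have "0 < trunc_mass phi R"
      using frac_heat_kernel_D(2)[OF fhk] h unique unfolding fbar_n
      by (rule trunc_mass_pos_if_unique_minimizer)
    ultimately show ?thesis
      unfolding I_def fbar_n using minimal[unfolded fbar_n]
      by (intro JKO_step_estimate[OF fhk R h _ _ fn _ Psi_nonneg grad hess bound])
  qed
  have "ennreal (1 / (2 * h)) * (\<Sum>n=1..N. Wh2 h (fbar n) (f n))
      \<le> (\<Sum>n=1..N. ennreal (1 / (2 * h)) * Wh2 h (fbar n) (f n)) + I N"
    by (simp add: sum_distrib_left)
  also have "\<dots> \<le> I 0 + of_nat N * ennreal (M / 2 * trunc_second_moment phi R)"
    by (rule telescoping_sum_le) (rule step)
  finally show ?thesis unfolding I_def .
qed

lemma ennreal_mult_le_imp_le_divide: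
  assumes "0 < a" "ennreal a * x \<le> ennreal b"
  shows "x \<le> ennreal (b / a)"
proof -
  have "x = ennreal (1 / a) * (ennreal a * x)"
    using assms(1) by (simp add: mult.assoc[symmetric] ennreal_mult[symmetric])
  also have "\<dots> \<le> ennreal (1 / a) * ennreal b" by (rule mult_left_mono) (use assms in auto)
  also have "\<dots> \<le> ennreal (b / a)"
    using assms(1) by (cases "0 \<le> b") (auto simp: ennreal_mult[symmetric] ennreal_neg)
  finally show ?thesis .
qed

lemma trunc_second_moment_nonneg: "(\<And>w. 0 \<le> phi w) \<Longrightarrow> 0 \<le> trunc_second_moment phi R"
  unfolding trunc_second_moment_def trunc_mass_def
  by (intro divide_nonneg_nonneg integral_nonneg_AE AE_I2) simp_all

lemma JKO_scheme_estimate: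
  fixes phi :: "'a::euclidean_space \<Rightarrow> real" and Psi :: "'a \<Rightarrow> real"
    and f fbar :: "nat \<Rightarrow> 'a \<times> 'a \<Rightarrow> real" and T :: real and N :: nat
  defines "h \<equiv> T / real N"
  assumes s: "0 < s" "s \<le> 1" and T: "0 < T" and N: "1 \<le> N" and R: "0 < R"
    and fhk: "frac_heat_kernel s h phi"
    and f_0: "f 0 = f0" and f0: "f0 \<in> P2a" and f0_Psi: "integrable lborel (\<lambda>z. Psi (snd z) * f0 z)"
    and steps: "\<forall>n\<in>{1..N}. fbar n = trunc_conv phi R (f (n - 1))
        \<and> f n \<in> P2a
        \<and> (\<forall>g\<in>P2a. JKO_functional h Psi (fbar n) (f n) \<le> JKO_functional h Psi (fbar n) g)
        \<and> (\<forall>g\<in>P2a. JKO_functional h Psi (fbar n) g \<le> JKO_functional h Psi (fbar n) (f n)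
              \<longrightarrow> (AE z in lborel. g z = f n z))"
    and Psi_nonneg: "\<And>v. 0 \<le> Psi v"
    and grad: "\<And>v. (Psi has_derivative (\<lambda>u. DPsi v \<bullet> u)) (at v)"
    and hess: "\<And>v. (DPsi has_derivative blinfun_apply (D2Psi v)) (at v)"
    and bound: "\<And>v. norm (D2Psi v) \<le> M"
  shows "(\<Sum>n=1..N. Wh2 h (fbar n) (f n))
    \<le> ennreal ((16 * (real DIM('a))\<^sup>2 + 2)
        * (h * (\<integral>z. Psi (snd z) * f0 z \<partial>lborel) + T * M * (sqrt h + h * R powr (2 - 2 * s))))"
proof -
  define K where "K = 16 * (real DIM('a))\<^sup>2"
  have K: "0 \<le> K" by (simp add: K_def)
  have M: "0 \<le> M" using bound[of 0] norm_ge_zero order_trans by blast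
  define I0 where "I0 = (\<integral>z. Psi (snd z) * f0 z \<partial>lborel)"
  have I0: "(\<integral>\<^sup>+z. ennreal (Psi (snd z) * f0 z) \<partial>lborel) = ennreal I0" "0 \<le> I0"
    unfolding I0_def using f0_Psi Psi_nonneg P2a_D(2)[OF f0]
    by (auto intro!: nn_integral_eq_integral integral_nonneg_AE)
  have h: "0 < h" "h * real N = T" unfolding h_def using T N by auto
  define m2 where "m2 = trunc_second_moment phi R"
  have m2: "0 \<le> m2" "m2 \<le> K * h * R powr (2 - 2 * s)"
    unfolding m2_def K_def
    using trunc_second_moment_nonneg[OF frac_heat_kernel_D(2)[OF fhk]]
      frac_heat_kernel_trunc_second_moment[OF fhk R _ s] h by auto
  define c where "c = M / 2 * m2"
  have c: "0 \<le> c" unfolding c_def using M m2 by simp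
  have "ennreal (1 / (2 * h)) * (\<Sum>n=1..N. Wh2 h (fbar n) (f n)) \<le> ennreal I0 + of_nat N * ennreal c"
    using JKO_scheme_dissipation[OF fhk R h(1) _ steps Psi_nonneg grad hess bound] f0 f_0 I0
    by (simp add: c_def m2_def)
  also have "\<dots> = ennreal (I0 + real N * c)"
    using I0 c by (simp add: ennreal_of_nat_eq_real_of_nat ennreal_mult ennreal_plus)
  finally have "(\<Sum>n=1..N. Wh2 h (fbar n) (f n)) \<le> ennreal ((I0 + real N * c) / (1 / (2 * h)))"
    by (rule ennreal_mult_le_imp_le_divide[rotated]) (use h in simp)
  also have "\<dots> = ennreal (2 * h * I0 + T * M * m2)"
    unfolding h(2)[symmetric] c_def using h(1) by (intro arg_cong[where f = ennreal]) (simp add: field_simps)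
  also have "\<dots> \<le> ennreal ((K + 2) * (h * I0 + T * M * (sqrt h + h * R powr (2 - 2 * s))))"
  proof (rule ennreal_leI)
    have "T * M * m2 \<le> T * M * (K * h * R powr (2 - 2 * s))"
      using m2 T M by (intro mult_left_mono) auto
    moreover have "0 \<le> K * (h * I0) + (K + 2) * (T * M * sqrt h) + 2 * (T * M * (h * R powr (2 - 2 * s)))"
      using h I0 T M K by simp
    ultimately show "2 * h * I0 + T * M * m2 \<le> (K + 2) * (h * I0 + T * M * (sqrt h + h * R powr (2 - 2 * s)))"
      by (simp add: algebra_simps)
  qed
  finally show ?thesis unfolding K_def I0_def .
qed

theorem lemma4p1:
  fixes s T :: real
    and Psi :: "'a::euclidean_space \<Rightarrow> real"
    and DPsi :: "'a \<Rightarrow> 'a"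
    and D2Psi :: "'a \<Rightarrow> 'a \<Rightarrow>\<^sub>L 'a"
    and f0 :: "'a \<times> 'a \<Rightarrow> real"
  assumes s: "0 < s" "s \<le> 1"
    and T: "0 < T"
    and Psi_nonneg: "\<And>v. 0 \<le> Psi v"
    and Psi_grad: "\<And>v. (Psi has_derivative (\<lambda>u. DPsi v \<bullet> u)) (at v)"
    and Psi_hess: "\<And>v. (DPsi has_derivative blinfun_apply (D2Psi v)) (at v)"
    and Psi_C11: "\<exists>L. L-lipschitz_on UNIV DPsi"
    and Psi_C21: "\<exists>L. L-lipschitz_on UNIV D2Psi"
    and Psi_hess_bdd: "bounded (range D2Psi)"
    and f0: "f0 \<in> P2a"
    and f0_Psi: "integrable lborel (\<lambda>z. Psi (snd z) * f0 z)"
  shows "\<exists>C>0. \<forall>N::nat. \<forall>R::real. \<forall>phi :: 'a \<Rightarrow> real.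
           \<forall>fbar f :: nat \<Rightarrow> ('a \<times> 'a \<Rightarrow> real).
    let h = T / real N in
    N \<ge> 1 \<longrightarrow> 0 < R \<longrightarrow> frac_heat_kernel s h phi \<longrightarrow>
    f 0 = f0 \<longrightarrow>
    (\<forall>n\<in>{1..N}. fbar n = trunc_conv phi R (f (n - 1))
        \<and> f n \<in> P2a
        \<and> (\<forall>g\<in>P2a. JKO_functional h Psi (fbar n) (f n) \<le> JKO_functional h Psi (fbar n) g)
        \<and> (\<forall>g\<in>P2a. JKO_functional h Psi (fbar n) g \<le> JKO_functional h Psi (fbar n) (f n)
              \<longrightarrow> (AE z in lborel. g z = f n z))) \<longrightarrow>
    (\<Sum>n=1..N. Wh2 h (fbar n) (f n))
      \<le> ennreal (C * (h * (\<integral>z. Psi (snd z) * f0 z \<partial>lborel)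
            + T * (SUP v. norm (D2Psi v)) * (sqrt h + h * R powr (2 - 2 * s))))"
proof -
  define M where "M = (SUP v. norm (D2Psi v))"
  have bound: "norm (D2Psi v) \<le> M" for v
    unfolding M_def using Psi_hess_bdd
    by (intro cSUP_upper bounded_imp_bdd_above) (auto simp: bounded_norm_comp image_comp)
  show ?thesis
    unfolding Let_def M_def[symmetric]
  proof (intro exI[of _ "16 * (real DIM('a))\<^sup>2 + 2"] conjI allI impI)
    show "0 < 16 * (real DIM('a))\<^sup>2 + 2" by (intro add_nonneg_pos) simp_all
  qed (rule JKO_scheme_estimate[OF s T _ _ _ _ f0 f0_Psi _ Psi_nonneg Psi_grad Psi_hess bound]; assumption)
qed

end
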